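(* Let $M$ be a positive integer with $\omega(M)\geq 2828$. Then $W(M)<M^{1/13}$.
   Context: $\omega(M)$ is the number of distinct prime divisors of $M$ and $W(M)=2^{\omega(M)}$ is the number of square-free divisors of $M$. *)

theory Defs
  imports Complex_Main "HOL-Computational_Algebra.Primes"
begin

definition omega :: "nat \<Rightarrow> nat" where
  "omega M = card (prime_factors M)"

definition W :: "nat \<Rightarrow> nat" where
  "W M = 2 ^ omega M"

end

theory Submission
  imports Defs
begin

(* Since M is at least the product of its distinct prime factors and 8192 = 2 ^ 13, it suffices
   that every set S of at least 2828 primes satisfies 8192 ^ card S < \<Prod>S.  Let T be a set of
   2828 numbers up to Y = 25678 containing all primes up to Y.  The primes of S outside T exceed
   Y > 8192, so replacing them by the elements of T missing from S and dropping the surplus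
   lowers \<Prod>S by more than the corresponding power of 8192: it is enough that
   8192 ^ card T < \<Prod>T.  Such a T comes from a certificate: walking through the numbers from
   7 to 25678 that are coprime to 30, every composite one is given with a factorization, and the
   product of the others, together with 2, 3 and 5, is bounded from below as m * 2 ^ e with a
   truncated mantissa m. *)

fun gaps_avoid_coprime :: "nat \<Rightarrow> nat \<Rightarrow> nat list \<Rightarrow> bool" where
  "gaps_avoid_coprime w n [] \<longleftrightarrow> True"
| "gaps_avoid_coprime w n (g # gs) \<longleftrightarrow>
     (\<forall>m \<in> {n<..<n + g}. \<not> coprime m w) \<and> gaps_avoid_coprime w (n + g) gs"

lemma gaps_avoid_coprime_append:
  "gaps_avoid_coprime w n (xs @ ys) \<longleftrightarrow>
     gaps_avoid_coprime w n xs \<and> gaps_avoid_coprime w (n + sum_list xs) ys"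
  by (induction xs arbitrary: n) (auto simp: add.assoc)

(* Stepping from n by the gaps gs skips no number coprime to w; as w divides the sum of the
   gaps, they can be cycled through indefinitely. *)
definition wheel :: "nat \<Rightarrow> nat list \<Rightarrow> nat \<Rightarrow> bool" where
  "wheel w gs n \<longleftrightarrow> 0 \<notin> set gs \<and> w dvd sum_list gs \<and> gaps_avoid_coprime w n gs"

lemma coprime_add_dvd_left_iff:
  fixes a s w :: nat
  assumes "w dvd s"
  shows "coprime (a + s) w \<longleftrightarrow> coprime a w"
proof (cases "w = 0")
  case True
  with assms show ?thesis by simp
next
  case False
  have "(a + s) mod w = a mod w"
    using assms by (metis add.right_neutral dvd_imp_mod_0 mod_add_right_eq)
  then show ?thesis using coprime_mod_left_iff[OF False] by metis
qed

lemma wheel_next_coprime: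
  assumes "wheel w (g # gs) n" "n < p" "coprime p w"
  shows "n + g \<le> p"
proof (rule ccontr)
  assume "\<not> n + g \<le> p"
  with assms(2) have "p \<in> {n<..<n + g}" by simp
  with assms(1,3) show False by (simp add: wheel_def)
qed

lemma wheel_rotate:
  assumes wheel: "wheel w (g # gs) n"
  shows "wheel w (gs @ [g]) (n + g)"
proof -
  let ?s = "sum_list (g # gs)"
  have "w dvd ?s" using wheel by (simp add: wheel_def)
  have "\<not> coprime m w" if "n + ?s < m" "m < n + ?s + g" for m
  proof -
    have "m - ?s \<in> {n<..<n + g}" using that by auto
    then have "\<not> coprime (m - ?s) w" using wheel by (simp add: wheel_def)
    then show ?thesis using coprime_add_dvd_left_iff[OF \<open>w dvd ?s\<close>, of "m - ?s"] that by simp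
  qed
  then have "gaps_avoid_coprime w (n + g + sum_list gs) [g]" by (simp add: ac_simps)
  with wheel show ?thesis by (auto simp: wheel_def gaps_avoid_coprime_append add.commute)
qed

lemma coprime_iff_not_dvd_prime:
  fixes p n :: nat
  assumes "prime p"
  shows "coprime n p \<longleftrightarrow> \<not> p dvd n"
  using assms by (metis coprime_commute not_coprimeI dvd_refl not_prime_unit prime_imp_coprime)

lemma coprime_30_iff: "coprime n (30 :: nat) \<longleftrightarrow> \<not> 2 dvd n \<and> \<not> 3 dvd n \<and> \<not> 5 dvd n"
proof -
  have primes: "prime (2 :: nat)" "prime (3 :: nat)" "prime (5 :: nat)"
    by simp_all
  have "coprime n (30 :: nat) \<longleftrightarrow> coprime n (2 * 3 * 5 :: nat)"
    by simp
  also have "\<dots> \<longleftrightarrow> coprime n 2 \<and> coprime n 3 \<and> coprime n 5"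
    by (simp only: coprime_mult_right_iff conj_assoc)
  also have "\<dots> \<longleftrightarrow> \<not> 2 dvd n \<and> \<not> 3 dvd n \<and> \<not> 5 dvd n"
    using primes by (simp only: coprime_iff_not_dvd_prime)
  finally show ?thesis .
qed

lemma wheel_30: "wheel 30 [4, 2, 4, 2, 4, 6, 2, 6] 7"
  by (simp add: wheel_def greaterThanLessThan_upt upt_rec coprime_30_iff)

(* Keeps mantissas below 2 ^ 32, so that evaluating the certificate by simp stays cheap. *)
fun round_down :: "nat \<times> nat \<Rightarrow> nat \<times> nat" where
  "round_down (m, e) = (if drop_bit 32 m = 0 then (m, e) else (drop_bit 16 m, e + 16))"

lemma round_down_le:
  assumes "round_down (m, e) = (m', e')"
  shows "m' * 2 ^ e' \<le> m * 2 ^ e"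
proof (cases "drop_bit 32 m = 0")
  case False
  have "drop_bit 16 m * 2 ^ (e + 16) = drop_bit 16 m * 2 ^ 16 * 2 ^ e"
    by (simp add: power_add)
  also have "\<dots> \<le> m * 2 ^ e"
    by (intro mult_le_mono1) (simp add: drop_bit_eq_div)
  finally show ?thesis using False assms by simp
qed (use assms in simp)

datatype sieve_entry = Keep | Split nat nat

(* In the state (k, m, e), k counts the kept candidates and m * 2 ^ e
   bounds their product from below. *)
fun sieve :: "nat list \<Rightarrow> nat \<Rightarrow> sieve_entry list \<Rightarrow> nat \<times> nat \<times> nat \<Rightarrow>
    (nat list \<times> nat \<times> nat \<times> nat \<times> nat) option" where
  "sieve gs n [] s = Some (gs, n, s)"
| "sieve [] n (_ # _) s = None"
| "sieve (g # gs) n (Keep # es) (k, m, e) =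
     sieve (gs @ [g]) (n + g) es (Suc k, round_down (n * m, e))"
| "sieve (g # gs) n (Split a b # es) s =
     (if 1 < a \<and> 1 < b \<and> a * b = n then sieve (gs @ [g]) (n + g) es s else None)"

(* Stops simp from re-traversing the unprocessed part of a certificate at every step. *)
lemma sieve_cong:
  "gs = gs' \<Longrightarrow> n = n' \<Longrightarrow> s = s' \<Longrightarrow> sieve gs n es s = sieve gs' n' es s'"
  by simp

lemma sieve_append:
  "sieve gs n (xs @ ys) s =
     (case sieve gs n xs s of None \<Rightarrow> None | Some (gs', n', s') \<Rightarrow> sieve gs' n' ys s')"
  by (induction gs n xs s rule: sieve.induct) auto

lemma sieve_sound:
  assumes "sieve gs n es (k, m, e) = Some (gs', N, k', m', e')" and "wheel w gs n"
  shows "n \<le> N \<and> (\<exists>Q \<subseteq> {n..<N}. {p \<in> {n..<N}. prime p \<and> coprime p w} \<subseteq> Q \<and>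
      k' = k + card Q \<and> m' * 2 ^ e' \<le> m * 2 ^ e * \<Prod>Q)"
  using assms
proof (induction gs n es "(k, m, e)" arbitrary: k m e rule: sieve.induct)
  case 1
  then show ?case by auto
next
  case 2
  then show ?case by simp
next
  case (3 g gs n es k m e)
  obtain m1 e1 where round: "round_down (n * m, e) = (m1, e1)" by fastforce
  have run: "sieve (gs @ [g]) (n + g) es (Suc k, m1, e1) = Some (gs', N, k', m', e')"
    using "3.prems"(1) round by simp
  have "0 < g" using "3.prems"(2) by (simp add: wheel_def)
  obtain Q where "n + g \<le> N" and Q: "Q \<subseteq> {n + g..<N}"
    and primes: "{p \<in> {n + g..<N}. prime p \<and> coprime p w} \<subseteq> Q"
    and card: "k' = Suc k + card Q" and bound: "m' * 2 ^ e' \<le> m1 * 2 ^ e1 * \<Prod>Q"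
    using "3.hyps"[OF _ run wheel_rotate[OF "3.prems"(2)]] round by auto
  have "finite Q" "n \<notin> Q" using Q \<open>0 < g\<close> finite_subset by auto
  have "p \<in> insert n Q" if p: "p \<in> {p \<in> {n..<N}. prime p \<and> coprime p w}" for p
  proof (cases "p = n")
    case False
    with p have "n + g \<le> p" by (intro wheel_next_coprime[OF "3.prems"(2)]) auto
    with p primes show ?thesis by auto
  qed simp
  moreover have "m' * 2 ^ e' \<le> m * 2 ^ e * \<Prod>(insert n Q)"
  proof -
    have "m' * 2 ^ e' \<le> n * m * 2 ^ e * \<Prod>Q"
      using bound round_down_le[OF round] by (meson le_trans mult_le_mono1)
    then show ?thesis using \<open>n \<notin> Q\<close> \<open>finite Q\<close> by (simp add: ac_simps)
  qed
  moreover have "insert n Q \<subseteq> {n..<N}" using Q \<open>n + g \<le> N\<close> \<open>0 < g\<close> by auto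
  moreover have "k' = k + card (insert n Q)" using card \<open>n \<notin> Q\<close> \<open>finite Q\<close> by simp
  ultimately show ?case using \<open>n + g \<le> N\<close> by (intro conjI exI[of _ "insert n Q"]) auto
next
  case (4 g gs n a b es k m e)
  have "1 < a" "1 < b" "a * b = n"
    and run: "sieve (gs @ [g]) (n + g) es (k, m, e) = Some (gs', N, k', m', e')"
    using "4.prems"(1) by (simp_all split: if_splits)
  then have "\<not> prime n" using prime_product by blast
  obtain Q where "n + g \<le> N" and Q: "Q \<subseteq> {n + g..<N}"
    and primes: "{p \<in> {n + g..<N}. prime p \<and> coprime p w} \<subseteq> Q"
    and rest: "k' = k + card Q" "m' * 2 ^ e' \<le> m * 2 ^ e * \<Prod>Q"
    using "4.hyps"[OF _ run wheel_rotate[OF "4.prems"(2)]] \<open>1 < a\<close> \<open>1 < b\<close> \<open>a * b = n\<close>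
    by auto
  have "p \<in> Q" if p: "p \<in> {p \<in> {n..<N}. prime p \<and> coprime p w}" for p
  proof -
    from p \<open>\<not> prime n\<close> have "n + g \<le> p"
      by (intro wheel_next_coprime[OF "4.prems"(2)]) (auto simp: le_less)
    with p primes show ?thesis by auto
  qed
  moreover have "Q \<subseteq> {n..<N}" using Q by auto
  ultimately show ?case using rest \<open>n + g \<le> N\<close> by (intro conjI exI[of _ Q]) auto
qed

lemma power_card_less_prod_primes:
  fixes S T :: "nat set" and Y c :: nat
  assumes T: "finite T" "{p. prime p \<and> p \<le> Y} \<subseteq> T" "T \<subseteq> {..Y}"
    and c: "0 < c" "c \<le> Y + 1" "c ^ card T < \<Prod>T"
    and S: "finite S" "\<forall>p \<in> S. prime p" "card T \<le> card S"
  shows "c ^ card S < \<Prod>S"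
proof -
  define A where "A = S \<inter> T"
  define B where "B = S - T"
  define d where "d = card S - card T"
  have "finite A" "finite B" "A \<subseteq> T" using S(1) by (auto simp: A_def B_def)
  have "S = A \<union> B" "A \<inter> B = {}" by (auto simp: A_def B_def)
  then have prod_S: "\<Prod>S = \<Prod>A * \<Prod>B" and card_S: "card S = card A + card B"
    using \<open>finite A\<close> \<open>finite B\<close> by (simp_all add: prod.union_disjoint card_Un_disjoint)
  have prod_T: "\<Prod>T = \<Prod>A * \<Prod>(T - A)"
    using prod.subset_diff[OF \<open>A \<subseteq> T\<close> T(1)] by (simp add: mult.commute)
  have card_T: "card T = card A + card (T - A)"
    using card_Diff_subset[OF \<open>finite A\<close> \<open>A \<subseteq> T\<close>] card_mono[OF T(1) \<open>A \<subseteq> T\<close>] by arith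
  have large: "Y < b" if "b \<in> B" for b
  proof (rule ccontr)
    assume "\<not> Y < b"
    with that S(2) have "b \<in> {p. prime p \<and> p \<le> Y}" by (auto simp: B_def)
    with T(2) that show False by (auto simp: B_def)
  qed
  have "(\<Prod>_ \<in> B. Y + 1) \<le> \<Prod>B"
    by (rule prod_mono) (use large in \<open>auto simp: Suc_le_eq\<close>)
  then have "(Y + 1) ^ card B \<le> \<Prod>B" by simp
  have "\<Prod>(T - A) \<le> (Y + 1) ^ card (T - A)"
    using T(3) by (intro prod_le_power) auto
  have "c ^ card S = c ^ card T * c ^ d"
    using S(3) by (simp add: d_def flip: power_add)
  also have "\<dots> < \<Prod>T * c ^ d"
    using c(1,3) by simp
  also have "\<dots> = \<Prod>A * (\<Prod>(T - A) * c ^ d)"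
    using prod_T by simp
  also have "\<dots> \<le> \<Prod>A * ((Y + 1) ^ card (T - A) * (Y + 1) ^ d)"
    using \<open>\<Prod>(T - A) \<le> (Y + 1) ^ card (T - A)\<close> power_mono[OF c(2), of d]
    by (intro mult_le_mono2 mult_le_mono) simp_all
  also have "\<dots> = \<Prod>A * (Y + 1) ^ card B"
    using card_S card_T S(3) by (simp add: d_def flip: power_add)
  also have "\<dots> \<le> \<Prod>S"
    using prod_S \<open>(Y + 1) ^ card B \<le> \<Prod>B\<close> by simp
  finally show ?thesis .
qed

lemma prime_in_235_or_coprime_30:
  fixes p :: nat
  assumes "prime p"
  shows "p \<in> {2, 3, 5} \<or> 7 \<le> p \<and> coprime p 30"
proof (cases "coprime p 30")
  case True
  then have "\<not> 2 dvd p" "\<not> 3 dvd p" "\<not> 5 dvd p" by (simp_all add: coprime_30_iff)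
  with prime_ge_2_nat[OF assms] have "7 \<le> p" by presburger
  with True show ?thesis by simp
next
  case False
  then have "2 dvd p \<or> 3 dvd p \<or> 5 dvd p" by (simp add: coprime_30_iff)
  with assms show ?thesis by (auto simp: prime_nat_iff)
qed

lemma prod_prime_factors_le:
  fixes M :: nat
  assumes "M > 0"
  shows "\<Prod>(prime_factors M) \<le> M"
proof -
  have "\<Prod>(prime_factors M) \<le> (\<Prod>p \<in> prime_factors M. p ^ multiplicity p M)"
  proof (rule prod_mono)
    fix p assume "p \<in> prime_factors M"
    then have "0 < multiplicity p M" "prime p" by (auto simp: prime_factors_multiplicity)
    then show "0 \<le> p \<and> p \<le> p ^ multiplicity p M"
      using self_le_power[OF prime_ge_1_nat] by blast
  qed
  also have "\<dots> = M" using prod_prime_factors[of M] assms by simp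
  finally show ?thesis .
qed

lemma power_less_imp_less_powr:
  fixes x y :: real
  assumes "0 \<le> x" "x ^ n < y" "0 < n"
  shows "x < y powr (1 / n)"
proof -
  have "0 \<le> y" using assms(1,2) by (meson le_less_trans less_imp_le zero_le_power)
  have "x = root n (x ^ n)" using assms(3,1) by (rule real_root_power_cancel[symmetric])
  also have "\<dots> < root n y" using assms(3,2) by (rule real_root_less_mono)
  also have "\<dots> = y powr (1 / n)" using assms(3) \<open>0 \<le> y\<close> by (rule root_powr_inverse)
  finally show ?thesis .
qed

definition sieve_block0 :: "sieve_entry list" where
  "sieve_block0 = [
    Keep, Keep, Keep, Keep, Keep, Keep, Keep, Keep, Keep, Keep,
    Keep, Keep, Split 7 7, Keep, Keep, Keep, Keep, Keep, Keep, Split 7 11,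
    Keep, Keep, Keep, Split 7 13, Keep, Keep, Keep, Keep, Keep, Keep,
    Split 7 17, Split 11 11, Keep, Keep, Split 7 19, Keep, Keep, Split 11 13, Keep, Keep,
    Keep, Split 7 23, Keep, Keep, Split 13 13, Keep, Keep, Keep, Split 11 17, Keep,
    Keep, Keep, Keep, Split 7 29, Split 11 19, Keep, Split 7 31, Split 13 17, Keep, Keep,
    Keep, Keep, Keep, Keep, Split 13 19, Keep, Split 11 23, Keep, Split 7 37, Keep,
    Keep, Keep, Keep, Keep, Keep, Split 7 41, Split 17 17, Keep, Split 13 23, Split 7 43,
    Keep, Keep, Keep, Keep, Split 11 29, Split 17 19, Split 7 47, Keep, Keep, Split 11 31,
    Split 7 49, Keep, Keep, Keep, Keep, Split 19 19, Keep, Split 7 53, Keep, Split 13 29,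
    Keep, Keep, Keep, Split 17 23, Keep, Keep, Split 13 31, Split 11 37, Keep, Split 7 59,
    Keep, Keep, Split 7 61, Keep, Keep, Split 19 23, Keep, Keep, Keep, Split 11 41,
    Keep, Keep, Keep, Keep, Split 7 67, Split 11 43, Keep, Split 13 37, Keep, Keep,
    Split 17 29, Split 7 71, Keep, Keep, Keep, Split 7 73, Split 11 47, Keep, Keep, Split 17 31,
    Split 23 23, Split 13 41, Split 7 77, Keep, Keep, Split 19 29, Split 7 79, Keep, Split 13 43, Keep,
    Keep, Keep, Keep, Split 7 83, Split 11 53, Keep, Split 19 31, Keep, Keep, Keep,
    Keep, Split 13 47, Keep, Keep, Keep, Split 7 89, Split 17 37, Keep, Split 7 91, Keep,
    Keep, Keep, Split 11 59, Keep, Keep, Keep, Split 23 29, Split 11 61, Keep, Keep,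
    Split 7 97, Keep, Split 13 53, Keep, Split 17 41, Keep, Split 19 37, Split 7 101, Keep, Split 23 31,
    Keep, Split 7 103, Keep, Split 17 43, Keep, Split 11 67, Keep, Keep, Split 7 107, Keep,
    Keep, Keep, Split 7 109, Split 13 59, Keep, Keep, Split 19 41, Split 11 71, Keep, Split 7 113,
    Split 13 61, Keep, Split 17 47, Split 11 73, Keep, Keep, Split 19 43, Keep, Keep, Keep,
    Keep, Split 7 119, Keep, Split 29 29, Split 7 121, Split 23 37, Keep, Keep, Keep, Keep,
    Split 11 79, Split 13 67, Keep, Keep, Keep, Keep, Split 7 127, Split 19 47, Split 29 31, Split 17 53,
    Keep, Keep, Split 11 83, Split 7 131, Keep, Split 13 71, Keep, Split 7 133, Keep, Keep,
    Split 23 41, Keep, Split 13 73, Keep, Split 7 137, Split 31 31, Keep, Keep, Split 7 139, Keep,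
    Split 11 89, Keep, Split 23 43, Keep, Keep, Split 7 143, Split 17 59, Split 19 53, Keep, Keep,
    Keep, Keep, Split 13 79, Keep, Keep, Split 17 61, Keep, Split 7 149, Keep, Keep,
    Split 7 151, Keep, Keep, Split 11 97, Keep, Split 29 37, Split 13 83, Split 23 47, Keep, Keep,
    Keep, Keep, Split 7 157, Keep, Keep, Split 11 101, Keep, Split 19 59, Keep, Split 7 161,
    Keep, Split 11 103, Split 17 67, Split 7 163, Split 31 37, Keep, Keep, Split 13 89, Split 19 61, Keep,
    Split 7 167, Keep, Split 11 107, Keep, Split 7 169, Keep, Split 29 41, Keep, Split 11 109, Keep,
    Split 17 71, Split 7 173, Keep, Keep, Split 23 53, Keep, Keep, Keep, Keep, Split 17 73,
    Split 11 113, Split 29 43, Keep, Split 7 179, Keep, Split 13 97, Split 7 181, Split 31 41, Split 19 67, Keep,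
    Keep, Keep, Keep, Keep, Keep, Keep, Keep, Keep, Split 7 187, Split 13 101,
    Keep, Keep, Keep, Split 11 121, Split 31 43, Split 7 191, Split 13 103, Split 17 79, Split 19 71, Split 7 193,
    Split 23 59, Keep, Split 29 47, Keep, Split 37 37, Keep, Split 7 197, Keep, Split 19 73, Split 13 107,
    Split 7 199, Split 11 127, Keep, Split 23 61, Keep, Split 17 83, Split 13 109, Split 7 203, Keep, Keep,
    Keep, Keep, Keep, Split 11 131, Keep, Keep, Keep, Split 31 47, Keep, Split 7 209,
    Split 13 113, Keep, Split 7 211, Keep, Keep, Keep, Keep, Keep, Keep, Split 19 79,
    Split 11 137, Keep, Split 17 89, Split 37 41, Split 7 217, Keep, Split 11 139, Keep, Split 29 53, Split 23 67,
    Keep, Split 7 221, Keep, Keep, Keep, Split 7 223, Keep, Keep, Split 11 143, Split 19 83,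
    Keep, Keep, Split 7 227, Split 37 43, Keep, Keep, Split 7 229, Keep, Keep, Keep,
    Keep, Keep, Keep, Split 7 233, Split 23 71, Keep, Split 11 149, Split 31 53, Split 17 97, Split 13 127,
    Keep, Split 11 151, Keep, Keep, Keep, Split 7 239, Split 23 73, Split 41 41, Split 7 241, Split 19 89,
    Keep, Keep, Keep, Split 13 131, Keep, Split 29 59, Split 17 101, Keep, Keep, Split 11 157,
    Split 7 247, Keep, Split 37 47, Keep, Keep, Split 17 103, Keep, Split 7 251, Keep, Split 41 43,
    Split 29 61, Split 7 253, Keep, Split 13 137, Keep, Keep, Keep, Split 11 163, Split 7 257, Keep,
    Split 13 139, Keep, Split 7 259, Split 23 79, Split 17 107, Keep, Split 31 59, Keep, Split 11 167, Split 7 263,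
    Split 19 97, Keep, Split 43 43, Split 17 109, Split 11 169, Keep, Keep, Keep, Keep, Keep,
    Keep, Split 7 269, Keep, Split 31 61, Split 7 271, Keep, Split 11 173, Keep, Split 23 83, Keep,
    Split 19 101, Split 17 113, Split 41 47, Keep, Keep, Split 13 149, Split 7 277, Split 29 67, Keep, Keep,
    Split 19 103, Split 37 53, Split 13 151, Split 7 281, Split 11 179, Keep, Keep, Split 7 283, Keep, Split 11 181,
    Keep, Keep, Keep, Keep, Split 7 287, Keep, Keep, Split 43 47, Split 7 289, Keep,
    Keep, Split 19 107, Keep, Split 13 157, Split 23 89, Split 7 293, Keep, Split 11 187, Split 29 71, Keep,
    Keep, Split 19 109, Split 31 67, Keep, Keep, Keep, Keep, Split 7 299, Keep, Split 11 191,
    Split 7 301, Keep, Keep, Split 29 73, Split 13 163, Split 11 193, Keep, Keep, Keep, Keep,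
    Keep, Split 19 113, Split 7 307, Keep, Split 17 127, Keep, Split 11 197, Split 13 167, Split 41 53, Split 7 311,
    Keep, Split 37 59, Split 11 199, Split 7 313, Split 13 169, Split 31 71, Keep, Keep, Split 47 47, Keep,
    Split 7 317, Keep, Split 17 131, Split 23 97, Split 7 319, Keep, Keep, Keep, Split 13 173, Keep]"

definition sieve_block1 :: "sieve_entry list" where
  "sieve_block1 = [
    Split 37 61, Split 7 323, Split 31 73, Keep, Keep, Keep, Split 43 53, Keep, Keep, Split 29 79,
    Keep, Keep, Split 11 209, Split 7 329, Keep, Keep, Split 7 331, Split 11 211, Split 23 101, Split 13 179,
    Split 17 137, Keep, Keep, Keep, Keep, Keep, Split 13 181, Keep, Split 7 337, Split 17 139,
    Split 23 103, Keep, Keep, Keep, Keep, Split 7 341, Keep, Keep, Keep, Split 7 343,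
    Split 29 83, Keep, Split 19 127, Keep, Split 41 59, Keep, Split 7 347, Split 11 221, Keep, Keep,
    Split 7 349, Keep, Split 31 79, Split 11 223, Keep, Split 23 107, Keep, Split 7 353, Keep, Keep,
    Split 37 67, Split 13 191, Split 19 131, Split 47 53, Split 11 227, Split 41 61, Keep, Split 23 109, Split 13 193, Split 7 359,
    Split 11 229, Keep, Split 7 361, Keep, Split 17 149, Split 43 59, Keep, Keep, Keep, Keep,
    Keep, Split 13 197, Split 11 233, Split 17 151, Split 7 367, Split 31 83, Keep, Split 29 89, Split 13 199, Keep,
    Keep, Split 7 371, Split 23 113, Split 19 137, Keep, Split 7 373, Keep, Keep, Split 43 61, Split 37 71,
    Split 11 239, Keep, Split 7 377, Split 19 139, Keep, Split 11 241, Split 7 379, Keep, Keep, Keep,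
    Split 17 157, Keep, Keep, Split 7 383, Keep, Keep, Keep, Keep, Keep, Split 37 73,
    Keep, Keep, Keep, Split 11 247, Keep, Split 7 389, Keep, Keep, Split 7 391, Keep,
    Split 13 211, Split 41 67, Keep, Keep, Split 31 89, Split 11 251, Keep, Split 17 163, Split 47 59, Keep,
    Split 7 397, Split 11 253, Keep, Keep, Keep, Keep, Keep, Split 7 401, Split 53 53, Split 29 97,
    Keep, Split 7 403, Split 11 257, Split 19 149, Keep, Keep, Split 17 167, Keep, Split 7 407, Keep,
    Keep, Keep, Split 7 409, Split 47 61, Split 19 151, Split 13 221, Keep, Split 43 67, Keep, Split 7 413,
    Split 11 263, Keep, Split 13 223, Keep, Keep, Split 41 71, Keep, Split 23 127, Split 37 79, Keep,
    Split 29 101, Split 7 419, Keep, Split 17 173, Split 7 421, Split 13 227, Keep, Keep, Split 11 269, Keep,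
    Keep, Keep, Split 13 229, Split 11 271, Split 19 157, Split 29 103, Split 7 427, Split 41 73, Keep, Keep,
    Split 31 97, Keep, Split 23 131, Split 7 431, Keep, Keep, Split 13 233, Split 7 433, Keep, Keep,
    Split 17 179, Split 11 277, Keep, Split 43 71, Split 7 437, Keep, Keep, Split 37 83, Split 7 439, Split 17 181,
    Keep, Keep, Keep, Split 11 281, Split 19 163, Split 7 443, Split 29 107, Split 13 239, Keep, Split 11 283,
    Keep, Keep, Split 53 59, Split 31 101, Split 13 241, Keep, Split 43 73, Split 7 449, Split 47 67, Split 23 137,
    Split 7 451, Split 29 109, Keep, Keep, Keep, Split 19 167, Split 11 289, Keep, Keep, Keep,
    Split 31 103, Split 23 139, Split 7 457, Keep, Keep, Split 13 247, Keep, Keep, Split 11 293, Split 7 461,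
    Keep, Split 53 61, Split 41 79, Split 7 463, Split 17 191, Keep, Keep, Keep, Keep, Split 13 251,
    Split 7 467, Keep, Split 29 113, Split 17 193, Split 7 469, Split 19 173, Split 11 299, Split 37 89, Keep, Keep,
    Keep, Split 7 473, Keep, Split 31 107, Keep, Keep, Keep, Keep, Split 47 71, Split 13 257,
    Keep, Keep, Split 17 197, Split 7 479, Keep, Keep, Split 7 481, Keep, Keep, Split 11 307,
    Split 31 109, Split 17 199, Keep, Keep, Split 43 79, Split 19 179, Split 41 83, Keep, Split 7 487, Keep,
    Split 13 263, Split 11 311, Split 23 149, Split 47 73, Keep, Split 7 491, Split 19 181, Split 11 313, Keep, Split 7 493,
    Keep, Keep, Keep, Keep, Keep, Split 23 151, Split 7 497, Split 59 59, Split 11 317, Keep,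
    Split 7 499, Split 13 269, Keep, Split 31 113, Split 11 319, Keep, Keep, Split 7 503, Split 13 271, Keep,
    Keep, Keep, Keep, Keep, Keep, Split 53 67, Split 11 323, Keep, Keep, Split 7 509,
    Split 43 83, Keep, Split 7 511, Keep, Keep, Split 17 211, Split 37 97, Keep, Split 59 61, Split 13 277,
    Keep, Split 23 157, Keep, Keep, Split 7 517, Keep, Split 19 191, Keep, Keep, Split 11 331,
    Keep, Split 7 521, Split 41 89, Split 13 281, Keep, Split 7 523, Split 19 193, Keep, Keep, Keep,
    Split 13 283, Split 29 127, Split 7 527, Keep, Keep, Keep, Split 7 529, Split 11 337, Keep, Split 47 79,
    Keep, Split 61 61, Keep, Split 7 533, Keep, Split 37 101, Keep, Split 19 197, Split 23 163, Split 11 341,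
    Split 13 289, Keep, Split 53 71, Keep, Keep, Split 7 539, Keep, Split 19 199, Split 7 541, Split 17 223,
    Keep, Keep, Split 29 131, Keep, Split 13 293, Split 37 103, Split 11 347, Keep, Keep, Split 43 89,
    Split 7 547, Keep, Split 11 349, Split 23 167, Keep, Keep, Keep, Split 7 551, Split 17 227, Keep,
    Split 53 73, Split 7 553, Keep, Keep, Split 11 353, Split 13 299, Keep, Split 17 229, Split 7 557, Split 47 83,
    Keep, Keep, Split 7 559, Keep, Keep, Keep, Keep, Keep, Split 31 127, Split 7 563,
    Keep, Keep, Split 11 359, Split 59 67, Split 37 107, Split 17 233, Keep, Split 11 361, Split 29 137, Split 41 97,
    Split 23 173, Split 7 569, Keep, Split 13 307, Split 7 571, Keep, Keep, Keep, Split 19 211, Keep,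
    Keep, Keep, Keep, Split 29 139, Split 37 109, Split 11 367, Split 7 577, Split 13 311, Keep, Keep,
    Keep, Split 31 131, Split 17 239, Split 7 581, Split 13 313, Keep, Keep, Split 7 583, Split 61 67, Keep,
    Keep, Split 17 241, Keep, Split 11 373, Split 7 587, Keep, Split 23 179, Split 13 317, Split 7 589, Keep,
    Keep, Keep, Keep, Split 41 101, Split 11 377, Split 7 593, Keep, Keep, Keep, Split 23 181,
    Split 11 379, Split 43 97, Keep, Split 37 113, Split 47 89, Split 53 79, Split 59 71, Split 7 599, Split 13 323, Keep,
    Split 7 601, Keep, Split 11 383, Keep, Keep, Split 41 103, Keep, Keep, Split 19 223, Keep,
    Keep, Split 31 137, Split 7 607, Keep, Keep, Keep, Split 17 251, Keep, Keep, Split 7 611,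
    Split 11 389, Keep, Keep, Split 7 613, Keep, Split 11 391, Split 13 331, Split 59 73, Split 31 139, Split 19 227,
    Split 7 617, Split 29 149, Keep, Split 61 71, Split 7 619, Keep, Keep, Split 43 101, Keep, Split 19 229,
    Keep, Split 7 623, Keep, Split 11 397, Split 17 257, Keep, Split 29 151, Split 13 337, Split 41 107, Keep,
    Split 23 191, Keep, Split 53 83, Split 7 629, Keep, Split 11 401, Split 7 631, Keep, Keep, Split 19 233,
    Split 43 103, Split 11 403, Split 23 193, Keep, Keep, Keep, Split 61 73, Keep, Split 7 637, Keep,
    Split 41 109, Split 17 263, Split 11 407, Keep, Keep, Split 7 641, Split 67 67, Keep, Split 11 409, Split 7 643]"

definition sieve_block2 :: "sieve_entry list" where
  "sieve_block2 = [
    Keep, Split 13 347, Keep, Keep, Keep, Keep, Split 7 647, Split 23 197, Split 13 349, Split 19 239,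
    Split 7 649, Keep, Keep, Split 29 157, Split 47 97, Keep, Keep, Split 7 653, Split 17 269, Split 23 199,
    Split 19 241, Keep, Split 13 353, Keep, Keep, Split 43 107, Keep, Split 17 271, Split 11 419, Split 7 659,
    Split 31 149, Keep, Split 7 661, Split 11 421, Split 41 113, Keep, Keep, Keep, Keep, Keep,
    Keep, Split 59 79, Keep, Split 13 359, Split 7 667, Keep, Keep, Split 31 151, Split 43 109, Keep,
    Split 13 361, Split 7 671, Split 37 127, Keep, Split 17 277, Split 7 673, Split 53 89, Keep, Keep, Split 29 163,
    Keep, Keep, Split 7 677, Split 11 431, Split 47 101, Keep, Split 7 679, Split 67 71, Keep, Split 11 433,
    Split 19 251, Split 13 367, Split 17 281, Split 7 683, Keep, Keep, Keep, Keep, Keep, Keep,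
    Split 11 437, Split 17 283, Keep, Keep, Split 61 79, Split 7 689, Split 11 439, Keep, Split 7 691, Split 47 103,
    Split 29 167, Split 37 131, Split 13 373, Split 23 211, Split 43 113, Keep, Split 31 157, Keep, Split 11 443, Keep,
    Split 7 697, Split 19 257, Keep, Split 67 73, Split 59 83, Split 13 377, Keep, Split 7 701, Keep, Split 17 289,
    Keep, Split 7 703, Split 13 379, Keep, Keep, Keep, Split 11 449, Keep, Split 7 707, Keep,
    Keep, Split 11 451, Split 7 709, Keep, Keep, Keep, Split 13 383, Split 17 293, Keep, Split 7 713,
    Keep, Split 19 263, Keep, Keep, Keep, Keep, Split 29 173, Keep, Keep, Split 11 457,
    Split 47 107, Split 7 719, Keep, Split 71 71, Split 7 721, Keep, Split 31 163, Split 13 389, Keep, Split 61 83,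
    Split 37 137, Split 11 461, Keep, Keep, Split 13 391, Keep, Split 7 727, Split 11 463, Keep, Keep,
    Keep, Split 19 269, Keep, Split 7 731, Keep, Split 47 109, Split 23 223, Split 7 733, Split 11 467, Split 53 97,
    Split 37 139, Keep, Split 19 271, Keep, Split 7 737, Split 13 397, Keep, Keep, Split 7 739, Split 31 167,
    Keep, Split 71 73, Keep, Split 29 179, Keep, Split 7 743, Split 11 473, Split 41 127, Keep, Split 13 401,
    Split 17 307, Split 23 227, Keep, Keep, Keep, Keep, Split 13 403, Split 7 749, Split 29 181, Split 59 89,
    Split 7 751, Keep, Split 19 277, Split 23 229, Split 11 479, Keep, Keep, Keep, Split 17 311, Split 11 481,
    Split 67 79, Keep, Split 7 757, Keep, Keep, Split 47 113, Split 13 409, Split 17 313, Keep, Split 7 761,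
    Split 73 73, Keep, Split 19 281, Split 7 763, Keep, Keep, Split 53 101, Split 11 487, Split 23 233, Split 31 173,
    Split 7 767, Split 41 131, Split 19 283, Keep, Split 7 769, Keep, Split 17 317, Keep, Keep, Split 11 491,
    Keep, Split 7 773, Keep, Keep, Keep, Split 11 493, Split 61 89, Keep, Keep, Keep,
    Keep, Split 13 419, Keep, Split 7 779, Split 53 103, Split 43 127, Split 7 781, Keep, Split 13 421, Keep,
    Keep, Keep, Split 11 499, Split 17 323, Split 23 239, Keep, Keep, Keep, Split 7 787, Split 37 149,
    Keep, Keep, Keep, Keep, Split 11 503, Split 7 791, Split 29 191, Split 23 241, Split 31 179, Split 7 793,
    Keep, Split 67 83, Keep, Split 19 293, Keep, Keep, Split 7 797, Keep, Split 37 151, Keep,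
    Split 7 799, Split 29 193, Split 11 509, Split 13 431, Split 71 79, Split 31 181, Split 41 137, Split 7 803, Keep, Split 17 331,
    Split 13 433, Split 43 131, Keep, Keep, Keep, Keep, Keep, Keep, Keep, Split 7 809,
    Keep, Split 53 107, Split 7 811, Split 13 437, Keep, Split 11 517, Keep, Keep, Split 41 139, Keep,
    Split 13 439, Keep, Split 29 197, Keep, Split 7 817, Split 59 97, Split 17 337, Split 11 521, Keep, Keep,
    Keep, Split 7 821, Keep, Split 11 523, Split 13 443, Split 7 823, Split 73 79, Split 29 199, Split 23 251, Split 53 109,
    Keep, Keep, Split 7 827, Keep, Split 11 527, Keep, Split 7 829, Keep, Split 37 157, Keep,
    Split 11 529, Keep, Keep, Split 7 833, Split 19 307, Split 13 449, Keep, Keep, Keep, Keep,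
    Keep, Keep, Split 11 533, Keep, Keep, Split 7 839, Keep, Keep, Split 7 841, Split 43 137,
    Split 71 83, Keep, Split 17 347, Keep, Split 19 311, Split 23 257, Split 61 97, Split 31 191, Keep, Keep,
    Split 7 847, Split 17 349, Keep, Split 13 457, Split 19 313, Split 11 541, Keep, Split 7 851, Split 59 101, Split 67 89,
    Split 47 127, Split 7 853, Split 43 139, Keep, Split 31 193, Keep, Split 53 113, Split 13 461, Split 7 857, Split 17 353,
    Keep, Keep, Split 7 859, Split 11 547, Split 13 463, Split 19 317, Keep, Split 37 163, Keep, Split 7 863,
    Keep, Keep, Split 23 263, Keep, Split 73 83, Split 11 551, Keep, Split 13 467, Keep, Split 59 103,
    Keep, Split 7 869, Keep, Keep, Split 7 871, Keep, Split 17 359, Split 31 197, Split 41 149, Keep,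
    Split 29 211, Keep, Split 11 557, Keep, Keep, Split 17 361, Split 7 877, Keep, Split 11 559, Keep,
    Split 47 131, Split 61 101, Keep, Split 7 881, Split 31 199, Keep, Split 37 167, Split 7 883, Split 23 269, Split 41 151,
    Split 11 563, Keep, Keep, Keep, Split 7 887, Keep, Keep, Keep, Split 7 889, Split 13 479,
    Keep, Split 23 271, Split 17 367, Split 79 79, Keep, Split 7 893, Split 13 481, Keep, Split 11 569, Keep,
    Keep, Keep, Keep, Split 11 571, Split 61 103, Keep, Split 19 331, Split 7 899, Keep, Keep,
    Split 7 901, Keep, Split 59 107, Keep, Split 71 89, Keep, Keep, Split 13 487, Keep, Split 17 373,
    Keep, Split 11 577, Split 7 907, Keep, Keep, Keep, Keep, Split 23 277, Keep, Split 7 911,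
    Keep, Split 13 491, Keep, Split 7 913, Keep, Split 37 173, Split 19 337, Split 43 149, Split 13 493, Split 11 583,
    Split 7 917, Keep, Keep, Split 59 109, Split 7 919, Split 41 157, Split 47 137, Split 17 379, Keep, Keep,
    Split 11 587, Split 7 923, Split 23 281, Split 29 223, Keep, Keep, Split 11 589, Keep, Split 13 499, Keep,
    Split 43 151, Split 73 89, Split 67 97, Split 7 929, Split 23 283, Split 17 383, Split 7 931, Keep, Split 11 593, Split 61 107,
    Keep, Split 47 139, Split 13 503, Split 31 211, Keep, Keep, Keep, Split 79 83, Split 7 937, Keep,
    Keep, Keep, Keep, Keep, Split 29 227, Split 7 941, Split 11 599, Split 19 347, Keep, Split 7 943,
    Keep, Split 11 601, Split 17 389, Split 13 509, Keep, Split 37 179, Split 7 947, Split 19 349, Keep, Split 29 229,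
    Split 7 949, Split 17 391, Split 61 109, Keep, Keep, Keep, Split 59 113, Split 7 953, Keep, Split 11 607,
    Keep, Split 41 163, Keep, Keep, Split 37 181, Keep, Keep, Split 19 353, Keep, Split 7 959,
    Keep, Split 11 611, Split 7 961, Split 53 127, Keep, Keep, Split 23 293, Split 11 613, Split 17 397, Split 43 157]"

definition sieve_block3 :: "sieve_entry list" where
  "sieve_block3 = [
    Split 29 233, Keep, Keep, Split 67 101, Split 7 967, Split 13 521, Keep, Keep, Split 11 617, Keep,
    Keep, Split 7 971, Split 13 523, Keep, Split 11 619, Split 7 973, Split 17 401, Split 19 359, Keep, Keep,
    Keep, Keep, Split 7 977, Keep, Split 41 167, Split 13 527, Split 7 979, Keep, Split 19 361, Keep,
    Keep, Keep, Split 13 529, Split 7 983, Keep, Split 71 97, Split 83 83, Split 61 113, Keep, Split 67 103,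
    Keep, Keep, Split 31 223, Keep, Split 11 629, Split 7 989, Split 13 533, Split 29 239, Split 7 991, Split 11 631,
    Split 53 131, Keep, Keep, Split 17 409, Keep, Keep, Keep, Keep, Split 19 367, Keep,
    Split 7 997, Keep, Split 29 241, Keep, Keep, Keep, Split 47 149, Split 7 1001, Split 43 163, Keep,
    Keep, Split 7 1003, Keep, Split 79 89, Split 13 541, Split 31 227, Keep, Keep, Split 7 1007, Split 11 641,
    Keep, Split 23 307, Split 7 1009, Split 37 191, Keep, Split 11 643, Keep, Split 73 97, Split 19 373, Split 7 1013,
    Split 41 173, Split 47 151, Split 31 229, Keep, Keep, Split 13 547, Split 11 647, Keep, Split 17 419, Keep,
    Keep, Split 7 1019, Split 11 649, Split 37 193, Split 7 1021, Keep, Split 23 311, Split 17 421, Keep, Split 13 551,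
    Split 67 107, Split 71 101, Keep, Split 43 167, Split 11 653, Keep, Split 7 1027, Keep, Split 23 313, Split 19 379,
    Keep, Keep, Keep, Split 7 1031, Keep, Split 31 233, Keep, Split 7 1033, Keep, Split 13 557,
    Keep, Keep, Split 11 659, Keep, Split 7 1037, Split 53 137, Split 13 559, Split 11 661, Split 7 1039, Split 19 383,
    Split 29 251, Keep, Split 37 197, Split 23 317, Keep, Split 7 1043, Split 67 109, Keep, Keep, Split 71 103,
    Split 13 563, Keep, Split 17 431, Keep, Keep, Split 11 667, Split 41 179, Split 7 1049, Keep, Keep,
    Split 7 1051, Split 17 433, Split 37 199, Split 53 139, Keep, Split 73 101, Split 47 157, Split 11 671, Split 83 89, Split 19 389,
    Keep, Split 13 569, Split 7 1057, Split 11 673, Split 31 239, Keep, Keep, Split 41 181, Split 13 571, Split 7 1061,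
    Split 17 437, Keep, Split 43 173, Split 7 1063, Split 11 677, Keep, Split 29 257, Keep, Keep, Split 17 439,
    Split 7 1067, Split 31 241, Keep, Keep, Split 7 1069, Keep, Keep, Split 59 127, Keep, Split 13 577,
    Keep, Split 7 1073, Split 11 683, Keep, Split 73 103, Keep, Keep, Split 17 443, Keep, Keep,
    Split 19 397, Keep, Keep, Split 7 1079, Keep, Keep, Split 7 1081, Split 67 113, Keep, Keep,
    Split 11 689, Keep, Keep, Keep, Split 71 107, Split 11 691, Keep, Keep, Split 7 1087, Split 23 331,
    Split 19 401, Keep, Split 29 263, Split 13 587, Split 17 449, Split 7 1091, Keep, Keep, Keep, Split 7 1093,
    Split 13 589, Split 47 163, Split 79 97, Split 11 697, Keep, Keep, Split 7 1097, Keep, Keep, Keep,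
    Split 7 1099, Split 43 179, Keep, Keep, Split 13 593, Split 11 701, Keep, Split 7 1103, Keep, Keep,
    Split 59 131, Split 11 703, Split 71 109, Keep, Split 61 127, Split 23 337, Keep, Keep, Keep, Split 7 1109,
    Split 17 457, Split 19 409, Split 7 1111, Split 31 251, Split 43 181, Split 13 599, Keep, Keep, Split 11 709, Split 29 269,
    Split 37 211, Split 73 107, Split 13 601, Keep, Split 7 1117, Keep, Keep, Split 41 191, Split 17 461, Keep,
    Split 11 713, Split 7 1121, Split 47 167, Keep, Split 29 271, Split 7 1123, Keep, Split 17 463, Keep, Keep,
    Keep, Keep, Split 7 1127, Split 13 607, Split 53 149, Keep, Split 7 1129, Keep, Split 11 719, Split 41 193,
    Keep, Split 89 89, Keep, Split 7 1133, Keep, Keep, Split 17 467, Split 13 611, Keep, Keep,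
    Split 73 109, Split 19 419, Keep, Split 31 257, Split 13 613, Split 7 1139, Split 79 101, Split 23 347, Split 7 1141, Split 61 131,
    Keep, Split 11 727, Split 19 421, Split 53 151, Keep, Keep, Keep, Split 13 617, Split 71 113, Split 23 349,
    Split 7 1147, Split 29 277, Keep, Split 11 731, Split 13 619, Split 83 97, Keep, Split 7 1151, Keep, Split 11 733,
    Keep, Split 7 1153, Split 41 197, Keep, Split 59 137, Keep, Keep, Keep, Split 7 1157, Keep,
    Split 11 737, Keep, Split 7 1159, Keep, Split 23 353, Keep, Split 11 739, Split 47 173, Split 79 103, Split 7 1163,
    Split 17 479, Keep, Split 29 281, Split 31 263, Split 41 199, Keep, Keep, Keep, Split 11 743, Split 13 629,
    Keep, Split 7 1169, Split 19 431, Keep, Split 7 1171, Split 59 139, Split 13 631, Split 29 283, Keep, Split 43 191,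
    Keep, Keep, Split 19 433, Keep, Keep, Keep, Split 7 1177, Keep, Split 73 113, Split 37 223,
    Split 23 359, Split 11 751, Keep, Split 7 1181, Keep, Keep, Split 17 487, Split 7 1183, Keep, Keep,
    Keep, Keep, Split 43 193, Split 19 437, Split 7 1187, Keep, Keep, Split 53 157, Split 7 1189, Split 11 757,
    Keep, Split 13 641, Split 31 269, Split 19 439, Split 17 491, Split 7 1193, Keep, Split 61 137, Split 13 643, Keep,
    Keep, Split 11 761, Keep, Split 17 493, Split 83 101, Keep, Keep, Split 7 1199, Split 37 227, Split 31 271,
    Split 7 1201, Split 13 647, Split 47 179, Split 19 443, Keep, Keep, Keep, Keep, Split 11 767, Split 23 367,
    Keep, Keep, Split 7 1207, Split 79 107, Split 11 769, Keep, Keep, Split 43 197, Split 37 229, Split 7 1211,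
    Split 61 139, Split 17 499, Split 13 653, Split 7 1213, Split 29 293, Keep, Split 11 773, Split 47 181, Split 67 127, Keep,
    Split 7 1217, Keep, Keep, Split 19 449, Split 7 1219, Keep, Keep, Keep, Split 83 103, Split 17 503,
    Split 43 199, Split 7 1223, Keep, Split 13 659, Split 11 779, Keep, Split 23 373, Keep, Split 31 277, Split 11 781,
    Split 13 661, Keep, Keep, Split 7 1229, Keep, Split 79 109, Split 7 1231, Split 37 233, Keep, Keep,
    Keep, Split 89 97, Split 53 163, Keep, Keep, Split 41 211, Split 17 509, Split 11 787, Split 7 1237, Keep,
    Keep, Split 13 667, Keep, Keep, Split 19 457, Split 7 1241, Keep, Keep, Keep, Split 7 1243,
    Keep, Split 31 281, Keep, Split 23 379, Keep, Split 11 793, Split 7 1247, Keep, Keep, Keep,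
    Split 7 1249, Keep, Split 13 673, Keep, Split 19 461, Keep, Split 11 797, Split 7 1253, Split 31 283, Split 67 131,
    Keep, Keep, Split 11 799, Split 59 149, Split 19 463, Split 13 677, Keep, Keep, Split 23 383, Split 7 1259,
    Keep, Keep, Split 7 1261, Keep, Split 11 803, Keep, Keep, Split 37 239, Keep, Split 53 167,
    Split 17 521, Keep, Keep, Keep, Split 7 1267, Split 19 467, Split 13 683, Split 83 107, Keep, Split 17 523,
    Keep, Split 7 1271, Split 11 809, Split 29 307, Split 59 151, Split 7 1273, Split 37 241, Split 11 811, Keep, Split 79 113,
    Keep, Keep, Split 7 1277, Keep, Split 23 389, Keep, Split 7 1279, Split 13 689, Split 17 527, Keep,
    Keep, Keep, Split 47 191, Split 7 1283, Split 13 691, Split 11 817, Split 89 101, Split 17 529, Keep, Keep]"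

definition sieve_block4 :: "sieve_entry list" where
  "sieve_block4 = [
    Keep, Keep, Keep, Split 71 127, Split 29 311, Split 7 1289, Keep, Split 11 821, Split 7 1291, Keep,
    Keep, Split 83 109, Keep, Split 11 823, Keep, Split 13 697, Keep, Split 47 193, Split 43 211, Split 29 313,
    Split 7 1297, Split 31 293, Split 61 149, Keep, Split 11 827, Split 19 479, Keep, Split 7 1301, Keep, Split 13 701,
    Split 11 829, Split 7 1303, Keep, Split 23 397, Keep, Keep, Split 13 703, Split 41 223, Split 7 1307, Keep,
    Keep, Keep, Split 7 1309, Split 89 103, Split 53 173, Keep, Split 67 137, Keep, Keep, Split 7 1313,
    Split 29 317, Split 17 541, Keep, Keep, Keep, Split 61 151, Split 13 709, Keep, Split 23 401, Keep,
    Split 11 839, Split 7 1319, Keep, Keep, Split 7 1321, Split 11 841, Split 19 487, Keep, Split 47 197, Split 59 157,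
    Split 13 713, Split 73 127, Keep, Keep, Keep, Split 37 251, Split 7 1327, Keep, Split 17 547, Split 71 131,
    Split 41 227, Keep, Split 67 139, Split 7 1331, Keep, Keep, Split 19 491, Split 7 1333, Keep, Keep,
    Keep, Split 13 719, Keep, Split 47 199, Split 7 1337, Split 11 851, Split 17 551, Keep, Split 7 1339, Keep,
    Split 83 113, Split 11 853, Split 41 229, Keep, Keep, Split 7 1343, Keep, Split 23 409, Split 97 97, Keep,
    Keep, Keep, Split 11 857, Keep, Keep, Keep, Keep, Split 7 1349, Split 11 859, Split 13 727,
    Split 7 1351, Keep, Keep, Keep, Split 17 557, Keep, Keep, Split 19 499, Split 53 179, Keep,
    Split 11 863, Keep, Split 7 1357, Split 13 731, Split 37 257, Keep, Split 31 307, Keep, Split 89 107, Split 7 1361,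
    Split 13 733, Keep, Keep, Split 7 1363, Keep, Keep, Split 41 233, Split 19 503, Split 11 869, Split 73 131,
    Split 7 1367, Split 17 563, Split 61 157, Split 11 871, Split 7 1369, Keep, Split 43 223, Split 53 181, Split 29 331, Keep,
    Split 13 739, Split 7 1373, Keep, Split 59 163, Keep, Keep, Keep, Keep, Split 23 419, Split 31 311,
    Keep, Split 11 877, Keep, Split 7 1379, Split 13 743, Keep, Split 7 1381, Split 19 509, Split 17 569, Keep,
    Keep, Split 23 421, Keep, Split 11 881, Keep, Split 89 109, Split 31 313, Split 17 571, Split 7 1387, Split 11 883,
    Keep, Keep, Split 71 137, Split 37 263, Keep, Split 7 1391, Keep, Keep, Keep, Split 7 1393,
    Split 11 887, Split 43 227, Split 13 751, Keep, Keep, Split 29 337, Split 7 1397, Keep, Keep, Keep,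
    Split 7 1399, Split 97 101, Split 41 239, Keep, Split 17 577, Keep, Keep, Split 7 1403, Split 11 893, Split 31 317,
    Keep, Keep, Keep, Split 13 757, Split 43 229, Keep, Split 59 167, Keep, Keep, Split 7 1409,
    Split 71 139, Keep, Split 7 1411, Split 41 241, Keep, Keep, Split 11 899, Split 13 761, Split 19 521, Keep,
    Keep, Split 11 901, Split 23 431, Split 47 211, Split 7 1417, Keep, Keep, Keep, Split 19 523, Keep,
    Split 61 163, Split 7 1421, Keep, Split 37 269, Split 23 433, Split 7 1423, Keep, Split 13 767, Keep, Split 11 907,
    Split 17 587, Split 67 149, Split 7 1427, Split 97 103, Split 13 769, Split 73 137, Split 7 1429, Keep, Keep, Split 17 589,
    Split 43 233, Split 11 911, Split 37 271, Split 7 1433, Split 79 127, Keep, Keep, Split 11 913, Split 13 773, Split 19 529,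
    Split 89 113, Keep, Split 29 347, Keep, Keep, Split 7 1439, Keep, Split 17 593, Split 7 1441, Keep,
    Keep, Split 23 439, Keep, Keep, Split 11 919, Keep, Split 67 151, Split 29 349, Split 53 191, Split 13 779,
    Split 7 1447, Keep, Keep, Keep, Split 73 139, Keep, Split 11 923, Split 7 1451, Keep, Keep,
    Keep, Split 7 1453, Keep, Keep, Split 17 599, Split 61 167, Split 23 443, Keep, Split 7 1457, Split 101 101,
    Split 59 173, Keep, Split 7 1459, Split 17 601, Split 11 929, Keep, Split 53 193, Split 13 787, Split 29 353, Split 7 1463,
    Keep, Keep, Split 37 277, Keep, Keep, Split 31 331, Keep, Keep, Keep, Split 43 239,
    Split 19 541, Split 7 1469, Keep, Split 41 251, Split 7 1471, Keep, Keep, Split 11 937, Split 13 793, Keep,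
    Split 17 607, Keep, Split 23 449, Keep, Keep, Keep, Split 7 1477, Keep, Split 79 131, Split 11 941,
    Keep, Split 13 797, Split 43 241, Split 7 1481, Keep, Split 11 943, Split 97 107, Split 7 1483, Split 13 799, Keep,
    Split 19 547, Split 37 281, Keep, Split 101 103, Split 7 1487, Split 29 359, Split 11 947, Split 17 613, Split 7 1489, Keep,
    Keep, Keep, Split 11 949, Split 53 197, Split 31 337, Split 7 1493, Keep, Keep, Keep, Keep,
    Split 19 551, Split 37 283, Keep, Split 47 223, Split 11 953, Keep, Split 17 617, Split 7 1499, Keep, Keep,
    Split 7 1501, Split 23 457, Keep, Split 13 809, Split 67 157, Split 17 619, Keep, Keep, Split 41 257, Split 83 127,
    Split 13 811, Split 53 199, Split 7 1507, Split 61 173, Keep, Split 59 179, Keep, Split 11 961, Split 97 109, Split 7 1511,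
    Split 71 149, Split 19 557, Keep, Split 7 1513, Keep, Keep, Split 23 461, Keep, Split 103 103, Keep,
    Split 7 1517, Split 13 817, Keep, Keep, Split 7 1519, Split 11 967, Keep, Split 29 367, Split 23 463, Keep,
    Keep, Split 7 1523, Keep, Keep, Split 47 227, Split 13 821, Split 59 181, Split 11 971, Keep, Keep,
    Split 17 629, Split 19 563, Split 13 823, Split 7 1529, Keep, Keep, Split 7 1531, Split 71 151, Keep, Split 17 631,
    Keep, Keep, Keep, Split 23 467, Split 11 977, Split 13 827, Keep, Split 31 347, Split 7 1537, Split 47 229,
    Split 11 979, Keep, Split 13 829, Keep, Split 41 263, Split 7 1541, Keep, Split 43 251, Keep, Split 7 1543,
    Split 101 107, Split 19 569, Split 11 983, Split 29 373, Split 31 349, Split 79 137, Split 7 1547, Keep, Keep, Split 37 293,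
    Split 7 1549, Keep, Split 19 571, Keep, Keep, Keep, Keep, Split 7 1553, Split 83 131, Split 73 149,
    Split 11 989, Keep, Keep, Keep, Split 17 641, Split 11 991, Keep, Split 13 839, Keep, Split 7 1559,
    Split 61 179, Split 67 163, Split 7 1561, Split 17 643, Split 13 841, Keep, Keep, Split 31 353, Keep, Split 47 233,
    Keep, Split 97 113, Split 19 577, Split 11 997, Split 7 1567, Keep, Keep, Split 79 139, Keep, Split 29 379,
    Keep, Split 7 1571, Split 17 647, Keep, Split 101 109, Split 7 1573, Split 23 479, Split 103 107, Split 73 151, Keep,
    Split 41 269, Split 11 1003, Split 7 1577, Split 61 181, Keep, Split 43 257, Split 7 1579, Keep, Keep, Split 13 851,
    Keep, Keep, Split 11 1007, Split 7 1583, Keep, Keep, Split 13 853, Keep, Split 11 1009, Split 17 653,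
    Split 29 383, Split 41 271, Keep, Keep, Keep, Split 7 1589, Split 31 359, Keep, Split 7 1591, Split 13 857,
    Split 11 1013, Split 71 157, Keep, Split 19 587, Keep, Keep, Split 13 859, Keep, Keep, Keep,
    Split 7 1597, Split 53 211, Split 67 167, Split 19 589, Keep, Split 23 487, Split 17 659, Split 7 1601, Split 11 1019, Keep,
    Split 13 863, Split 7 1603, Split 103 109, Split 11 1021, Split 47 239, Split 17 661, Keep, Keep, Split 7 1607, Keep]"

definition sieve_block5 :: "sieve_entry list" where
  "sieve_block5 = [
    Keep, Keep, Split 7 1609, Split 19 593, Split 59 191, Keep, Keep, Split 29 389, Keep, Split 7 1613,
    Split 23 491, Split 11 1027, Keep, Split 89 127, Split 43 263, Keep, Keep, Keep, Split 13 871, Split 47 241,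
    Keep, Split 7 1619, Split 17 667, Split 11 1031, Split 7 1621, Keep, Keep, Split 41 277, Split 37 307, Split 11 1033,
    Keep, Split 83 137, Split 31 367, Split 19 599, Keep, Split 59 193, Split 7 1627, Keep, Keep, Split 13 877,
    Split 11 1037, Keep, Split 101 113, Split 7 1631, Split 19 601, Keep, Split 11 1039, Split 7 1633, Keep, Split 17 673,
    Keep, Keep, Split 107 107, Split 13 881, Split 7 1637, Split 73 157, Keep, Keep, Split 7 1639, Split 23 499,
    Split 13 883, Keep, Keep, Keep, Keep, Split 7 1643, Keep, Split 37 311, Split 17 677, Split 29 397,
    Keep, Split 41 281, Keep, Split 13 887, Split 19 607, Split 83 139, Split 11 1049, Split 7 1649, Keep, Keep,
    Split 7 1651, Split 11 1051, Split 31 373, Split 43 269, Split 23 503, Split 71 163, Keep, Split 37 313, Keep, Split 67 173,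
    Keep, Keep, Split 7 1657, Split 41 283, Split 13 893, Split 17 683, Keep, Keep, Split 59 197, Split 7 1661,
    Split 29 401, Keep, Split 103 113, Split 7 1663, Split 19 613, Split 61 191, Split 43 271, Keep, Split 89 131, Split 107 109,
    Split 7 1667, Split 11 1061, Keep, Keep, Split 7 1669, Split 13 899, Keep, Split 11 1063, Keep, Keep,
    Split 23 509, Split 7 1673, Split 13 901, Keep, Keep, Split 19 617, Split 37 317, Keep, Split 11 1067, Split 59 199,
    Keep, Split 17 691, Split 31 379, Split 7 1679, Split 11 1069, Split 19 619, Split 7 1681, Split 79 149, Split 61 193, Keep,
    Keep, Keep, Keep, Split 13 907, Split 47 251, Keep, Split 11 1073, Keep, Split 7 1687, Keep,
    Split 53 223, Keep, Keep, Keep, Keep, Split 7 1691, Keep, Split 13 911, Split 17 697, Split 7 1693,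
    Split 71 167, Split 29 409, Keep, Keep, Split 11 1079, Split 31 383, Split 7 1697, Split 109 109, Keep, Split 11 1081,
    Split 7 1699, Keep, Split 73 163, Keep, Keep, Split 43 277, Split 17 701, Split 7 1703, Keep, Keep,
    Split 79 151, Keep, Keep, Keep, Split 13 919, Split 17 703, Keep, Split 11 1087, Keep, Split 7 1709,
    Keep, Keep, Split 7 1711, Keep, Split 23 521, Keep, Split 19 631, Split 67 179, Split 13 923, Split 11 1091,
    Keep, Keep, Split 41 293, Split 61 197, Split 7 1717, Split 11 1093, Split 23 523, Split 53 227, Keep, Keep,
    Keep, Split 7 1721, Keep, Split 17 709, Split 31 389, Split 7 1723, Split 11 1097, Keep, Keep, Split 13 929,
    Split 47 257, Split 43 281, Split 7 1727, Split 107 113, Keep, Keep, Split 7 1729, Keep, Keep, Keep,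
    Keep, Split 17 713, Split 67 181, Split 7 1733, Split 11 1103, Split 53 229, Split 61 199, Keep, Keep, Split 29 419,
    Keep, Keep, Keep, Split 23 529, Split 43 283, Split 7 1739, Split 19 641, Split 13 937, Split 7 1741, Split 73 167,
    Split 89 137, Keep, Split 11 1109, Keep, Split 29 421, Keep, Split 19 643, Split 11 1111, Split 17 719, Keep,
    Split 7 1747, Split 13 941, Keep, Keep, Split 37 331, Keep, Keep, Split 7 1751, Split 13 943, Keep,
    Keep, Split 7 1753, Keep, Keep, Split 71 173, Split 11 1117, Keep, Split 19 647, Split 7 1757, Keep,
    Split 31 397, Split 13 947, Split 7 1759, Split 109 113, Split 97 127, Keep, Keep, Split 11 1121, Split 13 949, Split 7 1763,
    Keep, Keep, Split 53 233, Split 11 1123, Split 17 727, Split 47 263, Split 83 149, Split 89 139, Keep, Keep,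
    Keep, Split 7 1769, Split 13 953, Keep, Split 7 1771, Keep, Split 79 157, Split 19 653, Keep, Keep,
    Split 11 1129, Keep, Split 17 731, Split 31 401, Keep, Keep, Split 7 1777, Split 23 541, Split 59 211, Keep,
    Keep, Split 17 733, Split 11 1133, Split 7 1781, Split 37 337, Keep, Keep, Split 7 1783, Keep, Keep,
    Split 13 961, Keep, Split 29 431, Keep, Split 7 1787, Keep, Keep, Split 19 659, Split 7 1789, Keep,
    Split 11 1139, Split 83 151, Keep, Keep, Keep, Split 7 1793, Keep, Split 29 433, Split 19 661, Split 17 739,
    Keep, Split 13 967, Keep, Split 23 547, Keep, Split 41 307, Keep, Split 7 1799, Split 43 293, Keep,
    Split 7 1801, Keep, Keep, Split 11 1147, Keep, Split 13 971, Split 73 173, Split 17 743, Keep, Keep,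
    Split 47 269, Keep, Split 7 1807, Keep, Keep, Split 11 1151, Split 53 239, Keep, Split 19 667, Split 7 1811,
    Split 31 409, Split 11 1153, Keep, Split 7 1813, Keep, Split 13 977, Keep, Split 97 131, Split 71 179, Keep,
    Split 7 1817, Keep, Split 11 1157, Split 29 439, Split 7 1819, Split 47 271, Keep, Keep, Split 11 1159, Split 41 311,
    Keep, Split 7 1823, Keep, Split 17 751, Split 113 113, Split 53 241, Split 13 983, Keep, Split 19 673, Keep,
    Split 11 1163, Split 67 191, Keep, Split 7 1829, Keep, Split 23 557, Split 7 1831, Keep, Keep, Split 101 127,
    Keep, Split 41 313, Split 37 347, Keep, Split 29 443, Split 71 181, Keep, Split 13 989, Split 7 1837, Split 19 677,
    Split 17 757, Split 61 211, Split 79 163, Split 11 1171, Split 13 991, Split 7 1841, Keep, Keep, Keep, Split 7 1843,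
    Keep, Keep, Split 37 349, Keep, Keep, Keep, Split 7 1847, Split 67 193, Split 17 761, Keep,
    Split 7 1849, Split 11 1177, Split 23 563, Keep, Keep, Split 13 997, Keep, Split 7 1853, Keep, Split 19 683,
    Keep, Keep, Split 31 419, Split 11 1181, Split 41 317, Keep, Keep, Keep, Keep, Split 7 1859,
    Split 47 277, Split 29 449, Split 7 1861, Split 83 157, Keep, Keep, Split 13 1003, Keep, Keep, Split 31 421,
    Split 11 1187, Split 37 353, Keep, Split 73 179, Split 7 1867, Split 17 769, Split 11 1189, Split 103 127, Split 23 569, Split 13 1007,
    Keep, Split 7 1871, Keep, Keep, Keep, Split 7 1873, Split 13 1009, Keep, Split 11 1193, Keep,
    Split 19 691, Split 23 571, Split 7 1877, Split 17 773, Keep, Keep, Split 7 1879, Split 59 223, Keep, Keep,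
    Split 13 1013, Keep, Keep, Split 7 1883, Keep, Keep, Split 11 1199, Split 79 167, Split 67 197, Split 43 307,
    Split 47 281, Split 11 1201, Split 73 181, Keep, Keep, Split 7 1889, Keep, Split 101 131, Split 7 1891, Keep,
    Split 17 779, Split 13 1019, Keep, Split 29 457, Keep, Split 89 149, Keep, Split 23 577, Split 13 1021, Split 11 1207,
    Split 7 1897, Split 37 359, Split 97 137, Keep, Keep, Split 47 283, Split 53 251, Split 7 1901, Keep, Keep,
    Split 19 701, Split 7 1903, Keep, Keep, Split 67 199, Keep, Keep, Split 11 1213, Split 7 1907, Split 13 1027,
    Split 19 703, Split 31 431, Split 7 1909, Keep, Split 29 461, Split 43 311, Split 17 787, Keep, Split 11 1217, Split 7 1913,
    Split 59 227, Keep, Keep, Split 13 1031, Split 11 1219, Keep, Keep, Keep, Split 31 433, Split 29 463,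
    Split 13 1033, Split 7 1919, Split 89 151, Keep, Split 7 1921, Keep, Split 11 1223, Keep, Split 43 313, Keep,
    Keep, Split 19 709, Keep, Split 13 1037, Split 97 139, Keep, Split 7 1927, Split 103 131, Keep, Split 23 587]"

definition sieve_block6 :: "sieve_entry list" where
  "sieve_block6 = [
    Split 13 1039, Split 59 229, Keep, Split 7 1931, Split 11 1229, Keep, Split 83 163, Split 7 1933, Keep, Split 11 1231,
    Split 29 467, Split 19 713, Split 17 797, Keep, Split 7 1937, Split 71 191, Keep, Split 41 331, Split 7 1939, Keep,
    Split 37 367, Split 17 799, Split 107 127, Keep, Keep, Split 7 1943, Split 61 223, Split 11 1237, Split 31 439, Keep,
    Keep, Split 53 257, Keep, Split 43 317, Keep, Split 13 1049, Split 23 593, Split 7 1949, Keep, Split 11 1241,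
    Split 7 1951, Split 19 719, Split 13 1051, Split 79 173, Keep, Split 11 1243, Keep, Keep, Keep, Keep,
    Keep, Keep, Split 7 1957, Split 71 193, Keep, Keep, Split 11 1247, Keep, Keep, Split 7 1961,
    Keep, Split 31 443, Split 11 1249, Split 7 1963, Split 59 233, Keep, Split 17 809, Keep, Keep, Keep,
    Split 7 1967, Split 47 293, Split 23 599, Keep, Split 7 1969, Split 17 811, Keep, Split 13 1061, Keep, Split 37 373,
    Keep, Split 7 1973, Split 19 727, Split 41 337, Split 13 1063, Split 23 601, Keep, Keep, Split 101 137, Keep,
    Split 109 127, Split 61 227, Split 11 1259, Split 7 1979, Keep, Split 83 167, Split 7 1981, Split 11 1261, Keep, Keep,
    Keep, Keep, Split 17 817, Split 29 479, Split 13 1069, Keep, Keep, Keep, Split 7 1987, Keep,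
    Split 31 449, Keep, Split 19 733, Keep, Keep, Split 7 1991, Split 53 263, Split 73 191, Split 13 1073, Split 7 1993,
    Split 17 821, Split 23 607, Keep, Keep, Split 61 229, Split 89 157, Split 7 1997, Split 11 1271, Split 71 197, Split 17 823,
    Split 7 1999, Keep, Keep, Split 11 1273, Keep, Keep, Split 107 131, Split 7 2003, Split 37 379, Split 13 1079,
    Keep, Keep, Split 101 139, Split 19 739, Split 11 1277, Keep, Split 13 1081, Keep, Split 17 827, Split 7 2009,
    Split 11 1279, Keep, Split 7 2011, Keep, Keep, Keep, Split 73 193, Split 17 829, Split 23 613, Split 59 239,
    Keep, Split 103 137, Split 11 1283, Split 19 743, Split 7 2017, Split 29 487, Split 71 199, Split 13 1087, Split 67 211, Split 79 179,
    Keep, Split 7 2021, Keep, Keep, Keep, Split 7 2023, Split 31 457, Split 37 383, Keep, Keep,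
    Split 11 1289, Split 13 1091, Split 7 2027, Split 23 617, Keep, Split 11 1291, Split 7 2029, Keep, Split 13 1093, Split 61 233,
    Split 59 241, Keep, Split 41 347, Split 7 2033, Split 43 331, Split 23 619, Split 29 491, Keep, Keep, Keep,
    Split 53 269, Split 13 1097, Split 17 839, Split 11 1297, Split 19 751, Split 7 2039, Split 109 131, Keep, Split 7 2041, Split 31 461,
    Keep, Split 17 841, Split 79 181, Keep, Split 41 349, Split 11 1301, Split 103 139, Keep, Keep, Keep,
    Split 7 2047, Split 11 1303, Split 13 1103, Keep, Keep, Split 113 127, Split 31 463, Split 7 2051, Split 83 173, Split 53 271,
    Keep, Split 7 2053, Split 11 1307, Split 73 197, Split 19 757, Keep, Keep, Split 37 389, Split 7 2057, Keep,
    Keep, Keep, Split 7 2059, Split 13 1109, Keep, Keep, Split 47 307, Keep, Keep, Split 7 2063,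
    Split 11 1313, Keep, Keep, Split 97 149, Split 19 761, Keep, Split 17 851, Split 29 499, Split 41 353, Split 31 467,
    Keep, Split 7 2069, Keep, Split 43 337, Split 7 2071, Split 17 853, Keep, Split 89 163, Split 11 1319, Split 23 631,
    Keep, Split 13 1117, Split 73 199, Split 11 1321, Keep, Keep, Split 7 2077, Keep, Keep, Keep,
    Keep, Keep, Keep, Split 7 2081, Split 17 857, Split 13 1121, Split 61 239, Split 7 2083, Split 29 503, Keep,
    Keep, Split 11 1327, Split 13 1123, Split 17 859, Split 7 2087, Split 19 769, Split 47 311, Keep, Split 7 2089, Keep,
    Keep, Keep, Keep, Split 11 1331, Split 97 151, Split 7 2093, Keep, Keep, Split 107 137, Split 11 1333,
    Keep, Split 17 863, Split 13 1129, Split 53 277, Keep, Split 19 773, Split 37 397, Split 7 2099, Keep, Split 61 241,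
    Split 7 2101, Split 47 313, Keep, Keep, Split 41 359, Keep, Split 11 1339, Keep, Keep, Keep,
    Split 23 641, Keep, Split 7 2107, Keep, Keep, Split 29 509, Keep, Keep, Split 11 1343, Split 7 2111,
    Keep, Keep, Split 23 643, Split 7 2113, Keep, Split 19 779, Split 113 131, Split 13 1139, Split 59 251, Keep,
    Split 7 2117, Keep, Keep, Keep, Split 7 2119, Split 37 401, Split 11 1349, Keep, Split 31 479, Keep,
    Split 83 179, Split 7 2123, Split 89 167, Keep, Keep, Split 107 139, Keep, Split 23 647, Keep, Keep,
    Split 53 281, Keep, Split 47 317, Split 7 2129, Split 17 877, Split 13 1147, Split 7 2131, Split 43 347, Keep, Split 11 1357,
    Keep, Split 109 137, Keep, Split 67 223, Keep, Keep, Split 19 787, Keep, Split 7 2137, Split 13 1151,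
    Keep, Split 11 1361, Split 17 881, Split 71 211, Keep, Split 7 2141, Split 13 1153, Split 11 1363, Split 53 283, Split 7 2143,
    Split 43 349, Split 17 883, Keep, Keep, Split 23 653, Split 83 181, Split 7 2147, Keep, Split 11 1367, Split 13 1157,
    Split 7 2149, Split 41 367, Split 101 149, Keep, Split 11 1369, Keep, Split 13 1159, Split 7 2153, Keep, Keep,
    Split 17 887, Keep, Split 79 191, Keep, Split 31 487, Keep, Split 11 1373, Keep, Split 29 521, Split 7 2159,
    Split 13 1163, Keep, Split 7 2161, Keep, Split 37 409, Keep, Keep, Split 19 797, Keep, Split 109 139,
    Split 23 659, Keep, Split 59 257, Split 29 523, Split 7 2167, Keep, Split 43 353, Split 17 893, Keep, Split 11 1381,
    Keep, Split 7 2171, Keep, Split 23 661, Split 67 227, Split 7 2173, Keep, Split 31 491, Split 13 1171, Keep,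
    Split 97 157, Keep, Split 7 2177, Keep, Split 79 193, Split 101 151, Split 7 2179, Split 11 1387, Keep, Keep,
    Keep, Keep, Keep, Split 7 2183, Split 17 899, Keep, Keep, Split 41 373, Keep, Split 11 1391,
    Keep, Split 61 251, Keep, Split 17 901, Keep, Split 7 2189, Keep, Keep, Split 7 2191, Split 23 667,
    Split 67 229, Split 103 149, Keep, Split 13 1181, Keep, Keep, Split 11 1397, Split 19 809, Keep, Keep,
    Split 7 2197, Keep, Split 11 1399, Keep, Split 89 173, Keep, Split 73 211, Split 7 2201, Split 19 811, Keep,
    Split 17 907, Split 7 2203, Keep, Split 13 1187, Split 11 1403, Split 43 359, Keep, Keep, Split 7 2207, Keep,
    Split 13 1189, Keep, Split 7 2209, Keep, Split 31 499, Keep, Split 23 673, Split 113 137, Split 17 911, Split 7 2213,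
    Keep, Keep, Split 11 1409, Split 37 419, Split 13 1193, Keep, Split 59 263, Split 11 1411, Split 19 817, Keep,
    Split 53 293, Split 7 2219, Split 41 379, Keep, Split 7 2221, Keep, Split 103 151, Split 47 331, Keep, Split 79 197,
    Keep, Split 23 677, Split 37 421, Keep, Keep, Split 11 1417, Split 7 2227, Split 31 503, Split 19 821, Keep,
    Keep, Split 67 233, Split 13 1201, Split 7 2231, Keep, Split 17 919, Keep, Split 7 2233, Split 19 823, Keep,
    Keep, Keep, Keep, Split 11 1423, Split 7 2237, Keep, Keep, Keep, Split 7 2239, Split 61 257,
    Keep, Keep, Split 29 541, Split 13 1207, Split 11 1427, Split 7 2243, Split 41 383, Split 113 139, Split 23 683, Split 19 827,
    Split 11 1429, Split 79 199, Keep, Keep, Keep, Keep, Keep, Split 7 2249, Keep, Split 19 829]"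

definition sieve_block7 :: "sieve_entry list" where
  "sieve_block7 = [
    Split 7 2251, Keep, Split 11 1433, Keep, Split 13 1213, Keep, Split 31 509, Split 43 367, Keep, Keep,
    Split 17 929, Keep, Split 7 2257, Keep, Keep, Split 97 163, Keep, Split 13 1217, Keep, Split 7 2261,
    Split 11 1439, Split 71 223, Split 47 337, Split 7 2263, Split 13 1219, Split 11 1441, Split 83 191, Split 101 157, Keep, Split 29 547,
    Split 7 2267, Split 59 269, Keep, Keep, Split 7 2269, Keep, Keep, Split 23 691, Split 13 1223, Keep,
    Keep, Split 7 2273, Keep, Split 11 1447, Keep, Keep, Split 17 937, Split 89 179, Keep, Split 19 839,
    Split 107 149, Split 37 431, Split 41 389, Split 7 2279, Keep, Split 11 1451, Split 7 2281, Keep, Keep, Split 13 1229,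
    Split 19 841, Split 11 1453, Split 59 271, Keep, Split 17 941, Keep, Split 13 1231, Keep, Split 7 2287, Split 67 239,
    Split 83 193, Split 37 433, Split 11 1457, Split 17 943, Keep, Split 7 2291, Split 43 373, Split 61 263, Split 11 1459, Split 7 2293,
    Keep, Keep, Keep, Keep, Keep, Keep, Split 7 2297, Split 13 1237, Keep, Keep,
    Split 7 2299, Keep, Split 17 947, Keep, Split 89 181, Keep, Split 71 227, Split 7 2303, Split 23 701, Keep,
    Split 127 127, Split 13 1241, Keep, Keep, Split 67 241, Split 31 521, Split 29 557, Split 107 151, Split 11 1469, Split 7 2309,
    Split 19 851, Split 103 157, Split 7 2311, Split 11 1471, Keep, Keep, Keep, Keep, Split 97 167, Split 17 953,
    Split 19 853, Split 13 1247, Split 31 523, Keep, Split 7 2317, Keep, Keep, Keep, Split 13 1249, Split 109 149,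
    Split 37 439, Split 7 2321, Keep, Keep, Split 71 229, Split 7 2323, Keep, Split 53 307, Keep, Split 41 397,
    Split 73 223, Split 19 857, Split 7 2327, Split 11 1481, Split 43 379, Keep, Split 7 2329, Split 23 709, Split 47 347, Split 11 1483,
    Keep, Split 19 859, Split 29 563, Split 7 2333, Keep, Split 17 961, Keep, Split 59 277, Keep, Split 83 197,
    Split 11 1487, Keep, Keep, Split 13 1259, Keep, Split 7 2339, Split 11 1489, Keep, Split 7 2341, Split 37 443,
    Split 13 1261, Split 19 863, Split 23 713, Split 47 349, Split 61 269, Keep, Keep, Keep, Split 11 1493, Keep,
    Split 7 2347, Keep, Split 17 967, Split 41 401, Keep, Keep, Keep, Split 7 2351, Split 109 151, Split 101 163,
    Split 43 383, Split 7 2353, Keep, Keep, Split 53 311, Keep, Split 11 1499, Keep, Split 7 2357, Split 29 569,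
    Split 17 971, Split 11 1501, Split 7 2359, Split 83 199, Keep, Split 13 1271, Keep, Split 61 271, Split 23 719, Split 7 2363,
    Split 71 233, Keep, Split 13 1273, Keep, Split 29 571, Keep, Keep, Split 73 227, Keep, Split 11 1507,
    Split 59 281, Split 7 2369, Split 53 313, Split 47 353, Split 7 2371, Split 13 1277, Keep, Keep, Split 17 977, Split 37 449,
    Keep, Split 11 1511, Split 13 1279, Keep, Keep, Split 127 131, Split 7 2377, Split 11 1513, Keep, Keep,
    Keep, Keep, Split 19 877, Split 7 2381, Split 79 211, Keep, Split 13 1283, Split 7 2383, Split 11 1517, Keep,
    Keep, Split 59 283, Keep, Keep, Split 7 2387, Split 17 983, Split 73 229, Split 23 727, Split 7 2389, Split 43 389,
    Keep, Split 29 577, Split 19 881, Keep, Keep, Split 7 2393, Split 11 1523, Split 13 1289, Keep, Keep,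
    Split 41 409, Split 31 541, Split 19 883, Split 97 173, Split 13 1291, Keep, Split 103 163, Split 7 2399, Split 107 157, Split 53 317,
    Split 7 2401, Keep, Split 17 989, Split 67 251, Split 11 1529, Keep, Keep, Keep, Split 113 149, Split 11 1531,
    Keep, Split 17 991, Split 7 2407, Split 19 887, Split 23 733, Split 13 1297, Split 101 167, Keep, Split 47 359, Split 7 2411,
    Keep, Keep, Keep, Split 7 2413, Split 61 277, Keep, Keep, Split 11 1537, Split 37 457, Split 13 1301,
    Split 7 2417, Keep, Keep, Keep, Split 7 2419, Keep, Split 13 1303, Keep, Split 17 997, Split 11 1541,
    Split 31 547, Split 7 2423, Keep, Split 19 893, Split 71 239, Split 11 1543, Keep, Keep, Keep, Split 13 1307,
    Keep, Split 23 739, Split 89 191, Split 7 2429, Split 73 233, Keep, Split 7 2431, Keep, Split 29 587, Keep,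
    Keep, Keep, Split 11 1549, Keep, Keep, Split 17 1003, Keep, Split 37 461, Split 7 2437, Split 113 151,
    Split 13 1313, Split 43 397, Keep, Split 19 899, Split 11 1553, Split 7 2441, Split 23 743, Keep, Keep, Split 7 2443,
    Keep, Split 71 241, Split 109 157, Keep, Split 17 1007, Keep, Split 7 2447, Split 37 463, Keep, Split 61 281,
    Split 7 2449, Split 13 1319, Split 11 1559, Split 17 1009, Keep, Split 131 131, Keep, Split 7 2453, Split 13 1321, Split 89 193,
    Split 41 419, Keep, Keep, Keep, Split 29 593, Split 103 167, Keep, Keep, Keep, Split 7 2459,
    Split 67 257, Split 17 1013, Split 7 2461, Keep, Split 19 907, Split 11 1567, Keep, Split 43 401, Split 47 367, Split 13 1327,
    Keep, Split 41 421, Split 61 283, Split 31 557, Split 7 2467, Split 23 751, Split 37 467, Split 11 1571, Split 59 293, Keep,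
    Keep, Split 7 2471, Keep, Split 11 1573, Split 19 911, Split 7 2473, Keep, Keep, Split 17 1019, Keep,
    Split 13 1333, Keep, Split 7 2477, Keep, Split 11 1577, Keep, Split 7 2479, Split 17 1021, Keep, Split 97 179,
    Split 11 1579, Split 29 599, Keep, Split 7 2483, Keep, Keep, Keep, Keep, Split 127 137, Keep,
    Split 13 1339, Split 23 757, Split 11 1583, Keep, Keep, Split 7 2489, Split 29 601, Keep, Split 7 2491, Split 107 163,
    Keep, Split 73 239, Keep, Split 31 563, Split 13 1343, Split 19 919, Keep, Keep, Split 101 173, Keep,
    Split 7 2497, Keep, Keep, Keep, Keep, Split 11 1591, Split 23 761, Split 7 2501, Keep, Split 83 211,
    Keep, Split 7 2503, Split 17 1031, Split 47 373, Split 89 197, Split 13 1349, Keep, Split 53 331, Split 7 2507, Keep,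
    Split 97 181, Split 17 1033, Split 7 2509, Split 11 1597, Keep, Keep, Keep, Keep, Split 43 409, Split 7 2513,
    Split 73 241, Keep, Keep, Split 29 607, Keep, Split 11 1601, Split 79 223, Split 67 263, Keep, Keep,
    Split 17 1037, Split 7 2519, Split 31 569, Split 13 1357, Split 7 2521, Split 19 929, Split 127 139, Keep, Keep, Split 17 1039,
    Keep, Split 41 431, Split 11 1607, Keep, Keep, Split 23 769, Split 7 2527, Split 13 1361, Split 11 1609, Split 31 571,
    Keep, Split 89 199, Keep, Split 7 2531, Split 13 1363, Split 37 479, Keep, Split 7 2533, Keep, Split 113 157,
    Split 11 1613, Keep, Keep, Split 41 433, Split 7 2537, Keep, Split 109 163, Split 13 1367, Split 7 2539, Split 29 613,
    Split 23 773, Keep, Keep, Keep, Split 13 1369, Split 7 2543, Split 19 937, Keep, Split 11 1619, Split 47 379,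
    Split 103 173, Split 71 251, Keep, Split 11 1621, Split 17 1049, Keep, Keep, Split 7 2549, Split 13 1373, Keep,
    Split 7 2551, Split 53 337, Keep, Split 17 1051, Split 107 167, Split 61 293, Split 19 941, Keep, Split 31 577, Keep,
    Split 29 617, Split 11 1627, Split 7 2557, Keep, Keep, Keep, Split 19 943, Keep, Keep, Split 7 2561,
    Keep, Split 79 227, Keep, Split 7 2563, Split 131 137, Split 29 619, Split 13 1381, Keep, Keep, Split 11 1633,
    Split 7 2567, Keep, Keep, Keep, Split 7 2569, Keep, Keep, Split 19 947, Split 41 439, Split 47 383]"

definition sieve_block8 :: "sieve_entry list" where
  "sieve_block8 = [
    Split 11 1637, Split 7 2573, Keep, Split 43 419, Split 37 487, Split 67 269, Split 11 1639, Split 13 1387, Split 17 1061, Keep,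
    Keep, Keep, Keep, Split 7 2579, Keep, Keep, Split 7 2581, Split 17 1063, Split 11 1643, Keep,
    Split 101 179, Split 13 1391, Keep, Split 79 229, Keep, Split 23 787, Split 43 421, Split 19 953, Split 7 2587, Split 59 307,
    Keep, Keep, Keep, Keep, Keep, Split 7 2591, Split 11 1649, Keep, Keep, Split 7 2593,
    Split 67 271, Split 11 1651, Split 41 443, Split 37 491, Keep, Split 17 1069, Split 7 2597, Keep, Split 13 1399, Keep,
    Split 7 2599, Split 31 587, Keep, Split 109 167, Split 131 139, Keep, Keep, Split 7 2603, Keep, Split 11 1657,
    Keep, Keep, Split 13 1403, Split 17 1073, Split 71 257, Keep, Keep, Keep, Split 19 961, Split 7 2609,
    Keep, Split 11 1661, Split 7 2611, Split 101 181, Split 47 389, Keep, Keep, Split 11 1663, Split 29 631, Keep,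
    Keep, Keep, Keep, Split 13 1409, Split 7 2617, Split 73 251, Keep, Split 23 797, Split 11 1667, Keep,
    Split 13 1411, Split 7 2621, Split 59 311, Keep, Split 11 1669, Split 7 2623, Keep, Keep, Split 19 967, Split 17 1081,
    Keep, Split 31 593, Split 7 2627, Split 53 347, Keep, Keep, Split 7 2629, Split 79 233, Split 41 449, Keep,
    Split 113 163, Split 13 1417, Keep, Split 7 2633, Keep, Split 103 179, Keep, Keep, Split 19 971, Keep,
    Keep, Keep, Split 37 499, Split 59 313, Split 11 1679, Split 7 2639, Split 17 1087, Keep, Split 7 2641, Split 11 1681,
    Keep, Split 53 349, Split 13 1423, Keep, Split 83 223, Split 107 173, Keep, Keep, Keep, Split 97 191,
    Split 7 2647, Split 43 431, Keep, Keep, Split 17 1091, Split 13 1427, Keep, Split 7 2651, Split 67 277, Split 19 977,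
    Split 31 599, Split 7 2653, Split 13 1429, Split 17 1093, Keep, Keep, Split 29 641, Keep, Split 7 2657, Split 11 1691,
    Split 23 809, Split 37 503, Split 7 2659, Keep, Split 43 433, Split 11 1693, Split 13 1433, Split 31 601, Keep, Split 7 2663,
    Split 103 181, Split 29 643, Split 17 1097, Split 23 811, Split 47 397, Keep, Split 11 1697, Keep, Split 71 263, Split 19 983,
    Keep, Split 7 2669, Split 11 1699, Keep, Split 7 2671, Keep, Split 59 317, Split 13 1439, Split 53 353, Keep,
    Keep, Split 97 193, Split 61 307, Keep, Split 11 1703, Split 41 457, Split 7 2677, Keep, Keep, Split 17 1103,
    Keep, Split 73 257, Split 29 647, Split 7 2681, Split 137 137, Keep, Split 89 211, Split 7 2683, Keep, Split 19 989,
    Keep, Keep, Split 11 1709, Keep, Split 7 2687, Split 13 1447, Split 31 607, Split 11 1711, Split 7 2689, Split 67 281,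
    Split 19 991, Split 37 509, Keep, Split 83 227, Split 47 401, Split 7 2693, Split 17 1109, Split 109 173, Keep, Split 13 1451,
    Keep, Split 113 167, Split 43 439, Split 79 239, Split 23 821, Split 11 1717, Split 13 1453, Split 7 2699, Keep, Split 41 461,
    Split 7 2701, Keep, Keep, Keep, Keep, Split 127 149, Split 23 823, Split 11 1721, Split 29 653, Split 13 1457,
    Split 19 997, Keep, Split 7 2707, Split 11 1723, Keep, Split 67 283, Split 13 1459, Split 61 311, Keep, Split 7 2711,
    Keep, Split 41 463, Split 17 1117, Split 7 2713, Split 11 1727, Keep, Split 31 613, Split 83 229, Keep, Keep,
    Split 7 2717, Split 23 827, Split 53 359, Keep, Split 7 2719, Keep, Split 79 241, Split 137 139, Split 43 443, Keep,
    Split 17 1121, Split 7 2723, Split 11 1733, Split 23 829, Keep, Keep, Keep, Keep, Keep, Split 17 1123,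
    Split 61 313, Split 13 1469, Split 71 269, Split 7 2729, Split 97 197, Split 29 659, Split 7 2731, Keep, Split 13 1471, Split 31 617,
    Split 11 1739, Split 19 1007, Keep, Keep, Split 41 467, Split 11 1741, Split 107 179, Keep, Split 7 2737, Keep,
    Split 29 661, Split 19 1009, Split 127 151, Keep, Keep, Split 7 2741, Split 31 619, Split 17 1129, Split 73 263, Split 7 2743,
    Keep, Keep, Keep, Split 11 1747, Keep, Split 47 409, Split 7 2747, Keep, Keep, Split 71 271,
    Split 7 2749, Split 19 1013, Keep, Split 13 1481, Keep, Split 11 1751, Keep, Split 7 2753, Keep, Split 37 521,
    Split 13 1483, Split 11 1753, Keep, Split 101 191, Split 23 839, Keep, Split 97 199, Split 43 449, Keep, Split 7 2759,
    Keep, Split 139 139, Split 7 2761, Split 13 1487, Keep, Split 61 317, Split 83 233, Split 23 841, Split 11 1759, Split 37 523,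
    Split 13 1489, Split 19 1019, Split 17 1139, Split 107 181, Split 7 2767, Keep, Keep, Keep, Keep, Keep,
    Split 11 1763, Split 7 2771, Split 19 1021, Keep, Split 13 1493, Split 7 2773, Keep, Keep, Keep, Keep,
    Keep, Keep, Split 7 2777, Keep, Keep, Split 53 367, Split 7 2779, Keep, Split 11 1769, Keep,
    Keep, Keep, Keep, Split 7 2783, Keep, Split 13 1499, Keep, Split 101 193, Split 17 1147, Keep,
    Keep, Split 109 179, Split 13 1501, Split 29 673, Split 131 149, Split 7 2789, Split 59 331, Keep, Split 7 2791, Keep,
    Keep, Split 11 1777, Split 113 173, Keep, Keep, Split 31 631, Split 17 1151, Keep, Split 23 851, Keep,
    Split 7 2797, Keep, Split 19 1031, Split 11 1781, Keep, Split 17 1153, Keep, Split 7 2801, Keep, Split 11 1783,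
    Split 23 853, Split 7 2803, Split 19 1033, Split 67 293, Split 29 677, Split 73 269, Split 41 479, Split 13 1511, Split 7 2807, Split 43 457,
    Split 11 1787, Keep, Split 7 2809, Split 71 277, Split 13 1513, Split 103 191, Split 11 1789, Keep, Keep, Split 7 2813,
    Split 47 419, Keep, Keep, Split 17 1159, Keep, Split 23 857, Keep, Split 13 1517, Split 11 1793, Keep,
    Split 109 181, Split 7 2819, Keep, Split 19 1039, Split 7 2821, Keep, Keep, Split 23 859, Keep, Keep,
    Split 53 373, Split 17 1163, Keep, Split 131 151, Split 73 271, Split 47 421, Split 7 2827, Keep, Split 13 1523, Keep,
    Split 29 683, Split 11 1801, Keep, Split 7 2831, Keep, Split 43 461, Split 79 251, Split 7 2833, Split 83 239, Keep,
    Keep, Split 89 223, Split 23 863, Keep, Split 7 2837, Keep, Keep, Split 31 641, Split 7 2839, Split 11 1807,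
    Split 103 193, Split 59 337, Keep, Keep, Split 101 197, Split 7 2843, Split 13 1531, Split 17 1171, Split 43 463, Keep,
    Keep, Split 11 1811, Keep, Split 19 1049, Split 31 643, Keep, Split 127 157, Split 7 2849, Keep, Split 71 281,
    Split 7 2851, Keep, Keep, Split 41 487, Split 19 1051, Keep, Keep, Split 13 1537, Split 11 1817, Keep,
    Keep, Keep, Split 7 2857, Split 83 241, Split 11 1819, Keep, Split 37 541, Keep, Keep, Split 7 2861,
    Keep, Split 13 1541, Split 29 691, Split 7 2863, Keep, Keep, Split 11 1823, Split 31 647, Split 13 1543, Keep,
    Split 7 2867, Keep, Split 17 1181, Split 43 467, Split 7 2869, Split 53 379, Keep, Split 71 283, Split 101 199, Keep,
    Keep, Split 7 2873, Keep, Keep, Split 11 1829, Keep, Keep, Split 41 491, Split 13 1549, Split 11 1831,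
    Keep, Keep, Keep, Split 7 2879, Split 19 1061, Keep, Split 7 2881, Split 23 877, Keep, Keep,
    Split 17 1187, Keep, Split 13 1553, Split 61 331, Split 19 1063, Keep, Split 89 227, Split 11 1837, Split 7 2887, Split 17 1189,
    Keep, Split 73 277, Split 113 179, Keep, Keep, Split 7 2891, Split 37 547, Split 31 653, Keep, Split 7 2893]"

definition sieve_block9 :: "sieve_entry list" where
  "sieve_block9 = [
    Split 47 431, Keep, Split 23 881, Split 13 1559, Keep, Split 11 1843, Split 7 2897, Split 17 1193, Keep, Split 103 197,
    Split 7 2899, Keep, Split 53 383, Split 79 257, Split 23 883, Split 19 1069, Split 11 1847, Split 7 2903, Keep, Keep,
    Split 29 701, Keep, Split 11 1849, Keep, Keep, Split 47 433, Keep, Keep, Keep, Split 7 2909,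
    Keep, Split 13 1567, Split 7 2911, Split 89 229, Split 11 1853, Split 19 1073, Keep, Keep, Keep, Split 23 887,
    Keep, Keep, Split 137 149, Split 17 1201, Split 7 2917, Split 13 1571, Split 31 659, Keep, Split 107 191, Keep,
    Keep, Split 7 2921, Split 11 1859, Split 113 181, Split 41 499, Split 7 2923, Split 97 211, Split 11 1861, Split 59 347, Keep,
    Keep, Keep, Split 7 2927, Split 31 661, Split 103 199, Split 13 1577, Split 7 2929, Keep, Keep, Split 73 281,
    Split 17 1207, Keep, Split 13 1579, Split 7 2933, Keep, Split 11 1867, Split 19 1081, Keep, Keep, Keep,
    Split 61 337, Split 29 709, Keep, Split 131 157, Split 67 307, Split 7 2939, Split 13 1583, Split 11 1871, Split 7 2941, Split 59 349,
    Keep, Split 43 479, Keep, Split 11 1873, Split 37 557, Keep, Split 53 389, Split 17 1213, Split 41 503, Keep,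
    Split 7 2947, Split 47 439, Keep, Keep, Split 11 1877, Split 107 193, Split 19 1087, Split 7 2951, Split 73 283, Keep,
    Split 11 1879, Split 7 2953, Split 23 899, Keep, Split 13 1591, Split 137 151, Split 17 1217, Keep, Split 7 2957, Split 127 163,
    Keep, Split 139 149, Split 7 2959, Keep, Keep, Split 17 1219, Split 19 1091, Keep, Split 89 233, Split 7 2963,
    Keep, Keep, Keep, Keep, Keep, Split 13 1597, Split 19 1093, Keep, Keep, Split 79 263,
    Split 11 1889, Split 7 2969, Keep, Split 17 1223, Split 7 2971, Split 11 1891, Split 71 293, Keep, Keep, Split 13 1601,
    Split 109 191, Split 47 443, Split 59 353, Split 37 563, Split 83 251, Split 67 311, Split 7 2977, Split 19 1097, Keep, Split 29 719,
    Keep, Split 23 907, Split 31 673, Split 7 2981, Split 41 509, Keep, Keep, Split 7 2983, Keep, Split 13 1607,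
    Split 17 1229, Keep, Keep, Keep, Split 7 2987, Split 11 1901, Split 13 1609, Keep, Split 7 2989, Split 17 1231,
    Keep, Split 11 1903, Keep, Split 43 487, Keep, Split 7 2993, Split 23 911, Split 19 1103, Keep, Keep,
    Split 13 1613, Split 67 313, Split 11 1907, Keep, Keep, Split 31 677, Split 139 151, Split 7 2999, Split 11 1909, Keep,
    Split 7 3001, Keep, Keep, Keep, Keep, Keep, Split 17 1237, Keep, Split 109 193, Split 53 397,
    Split 11 1913, Split 13 1619, Split 7 3007, Split 37 569, Keep, Keep, Keep, Split 19 1109, Split 13 1621, Split 7 3011,
    Split 107 197, Split 29 727, Keep, Split 7 3013, Split 17 1241, Keep, Split 47 449, Keep, Split 11 1919, Split 43 491,
    Split 7 3017, Keep, Split 37 571, Split 11 1921, Split 7 3019, Split 23 919, Keep, Keep, Keep, Split 13 1627,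
    Keep, Split 7 3023, Keep, Split 61 347, Keep, Split 31 683, Keep, Split 59 359, Keep, Keep,
    Keep, Split 11 1927, Split 17 1247, Split 7 3029, Split 127 167, Keep, Split 7 3031, Keep, Split 19 1117, Keep,
    Split 13 1633, Split 17 1249, Split 67 317, Split 11 1931, Keep, Split 79 269, Split 53 401, Split 29 733, Split 7 3037, Split 11 1933,
    Keep, Split 89 239, Keep, Split 13 1637, Keep, Split 7 3041, Split 61 349, Split 107 199, Split 19 1121, Split 7 3043,
    Split 11 1937, Split 101 211, Keep, Keep, Keep, Keep, Split 7 3047, Split 83 257, Split 19 1123, Keep,
    Split 7 3049, Keep, Split 37 577, Split 131 163, Split 13 1643, Split 41 521, Split 23 929, Split 7 3053, Split 11 1943, Keep,
    Keep, Keep, Split 73 293, Keep, Keep, Keep, Split 17 1259, Keep, Split 79 271, Split 7 3059,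
    Keep, Split 31 691, Split 7 3061, Split 29 739, Keep, Split 13 1649, Split 11 1949, Split 41 523, Split 89 241, Split 19 1129,
    Split 43 499, Split 11 1951, Split 13 1651, Keep, Split 7 3067, Split 109 197, Split 47 457, Keep, Keep, Keep,
    Keep, Split 7 3071, Keep, Keep, Split 137 157, Split 7 3073, Keep, Keep, Keep, Split 11 1957,
    Keep, Split 61 353, Split 7 3077, Split 13 1657, Split 29 743, Split 23 937, Split 7 3079, Keep, Keep, Keep,
    Keep, Split 11 1961, Keep, Split 7 3083, Split 113 191, Keep, Keep, Split 11 1963, Keep, Keep,
    Split 17 1271, Keep, Keep, Keep, Split 13 1663, Split 7 3089, Split 43 503, Split 97 223, Split 7 3091, Split 17 1273,
    Split 23 941, Keep, Keep, Split 59 367, Split 11 1969, Keep, Split 47 461, Split 13 1667, Keep, Split 53 409,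
    Split 7 3097, Keep, Split 23 943, Split 109 199, Split 13 1669, Keep, Split 11 1973, Split 7 3101, Split 17 1277, Keep,
    Split 37 587, Split 7 3103, Keep, Split 31 701, Split 103 211, Keep, Keep, Split 17 1279, Split 7 3107, Keep,
    Keep, Split 47 463, Split 7 3109, Keep, Split 11 1979, Keep, Split 29 751, Split 23 947, Keep, Split 7 3113,
    Split 19 1147, Split 71 307, Keep, Keep, Split 113 193, Split 17 1283, Keep, Keep, Split 139 157, Split 13 1679,
    Split 83 263, Split 7 3119, Keep, Keep, Split 7 3121, Keep, Split 13 1681, Split 11 1987, Keep, Keep,
    Split 19 1151, Keep, Split 131 167, Keep, Split 79 277, Split 43 509, Split 7 3127, Keep, Split 61 359, Split 11 1991,
    Split 19 1153, Keep, Split 17 1289, Split 7 3131, Split 23 953, Split 11 1993, Keep, Split 7 3133, Keep, Split 37 593,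
    Keep, Split 17 1291, Split 47 467, Split 29 757, Split 7 3137, Keep, Split 11 1997, Split 127 173, Split 7 3139, Keep,
    Split 31 709, Split 13 1691, Split 11 1999, Keep, Keep, Split 7 3143, Keep, Split 59 373, Split 13 1693, Keep,
    Split 97 227, Split 19 1159, Keep, Keep, Split 11 2003, Keep, Keep, Split 7 3149, Split 17 1297, Keep,
    Split 7 3151, Split 13 1697, Keep, Keep, Split 29 761, Keep, Keep, Split 71 311, Split 13 1699, Keep,
    Keep, Split 19 1163, Split 7 3157, Split 23 961, Keep, Keep, Split 17 1301, Split 11 2011, Keep, Split 7 3161,
    Keep, Keep, Split 13 1703, Split 7 3163, Keep, Split 17 1303, Keep, Keep, Keep, Split 37 599,
    Split 7 3167, Keep, Split 67 331, Split 41 541, Split 7 3169, Split 11 2017, Keep, Keep, Split 79 281, Split 149 149,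
    Split 53 419, Split 7 3173, Split 97 229, Split 13 1709, Split 17 1307, Split 71 313, Keep, Split 11 2021, Split 37 601, Split 23 967,
    Split 13 1711, Keep, Split 19 1171, Split 7 3179, Keep, Split 113 197, Split 7 3181, Keep, Keep, Keep,
    Keep, Keep, Split 31 719, Keep, Split 11 2027, Split 29 769, Keep, Keep, Split 7 3187, Split 53 421,
    Split 11 2029, Split 13 1717, Split 83 269, Split 137 163, Split 23 971, Split 7 3191, Split 89 251, Keep, Keep, Split 7 3193,
    Split 79 283, Split 59 379, Split 11 2033, Keep, Keep, Split 13 1721, Split 7 3197, Keep, Split 61 367, Keep,
    Split 7 3199, Keep, Split 13 1723, Split 43 521, Keep, Split 73 307, Split 29 773, Split 7 3203, Split 17 1319, Split 41 547,
    Split 11 2039, Keep, Split 19 1181, Keep, Keep, Split 11 2041, Keep, Split 17 1321, Split 37 607, Split 7 3209,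
    Keep, Split 23 977, Split 7 3211, Keep, Keep, Split 113 199, Split 43 523, Split 83 271, Split 149 151, Keep]"

definition sieve_block10 :: "sieve_entry list" where
  "sieve_block10 = [
    Split 71 317, Keep, Split 47 479, Split 11 2047, Split 7 3217, Split 101 223, Split 13 1733, Keep, Split 31 727, Keep,
    Keep, Split 7 3221, Keep, Split 19 1187, Split 17 1327, Split 7 3223, Keep, Keep, Keep, Split 107 211,
    Split 67 337, Split 11 2053, Split 7 3227, Split 19 1189, Split 59 383, Split 97 233, Split 7 3229, Split 13 1739, Split 23 983, Keep,
    Keep, Keep, Split 11 2057, Split 7 3233, Split 13 1741, Keep, Keep, Keep, Split 11 2059, Keep,
    Split 139 163, Split 17 1333, Split 131 173, Split 19 1193, Keep, Split 7 3239, Keep, Split 37 613, Split 7 3241, Keep,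
    Split 11 2063, Keep, Keep, Split 73 311, Keep, Split 13 1747, Keep, Keep, Split 31 733, Keep,
    Split 7 3247, Split 127 179, Keep, Keep, Split 23 989, Keep, Split 61 373, Split 7 3251, Split 11 2069, Split 13 1751,
    Keep, Split 7 3253, Keep, Split 11 2071, Keep, Keep, Split 13 1753, Split 23 991, Split 7 3257, Split 151 151,
    Keep, Keep, Split 7 3259, Keep, Split 19 1201, Split 29 787, Split 37 617, Split 17 1343, Split 41 557, Split 7 3263,
    Split 53 431, Split 11 2077, Split 73 313, Keep, Keep, Keep, Split 13 1759, Keep, Split 89 257, Keep,
    Split 137 167, Split 7 3269, Split 47 487, Split 11 2081, Split 7 3271, Keep, Split 37 619, Keep, Split 31 739, Split 11 2083,
    Split 13 1763, Keep, Split 101 227, Split 23 997, Split 17 1349, Keep, Split 7 3277, Keep, Split 53 433, Split 59 389,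
    Split 11 2087, Keep, Keep, Split 7 3281, Split 103 223, Keep, Split 11 2089, Split 7 3283, Split 127 181, Split 83 277,
    Keep, Split 13 1769, Split 109 211, Keep, Split 7 3287, Keep, Keep, Keep, Split 7 3289, Keep,
    Keep, Split 31 743, Keep, Keep, Split 19 1213, Split 7 3293, Keep, Keep, Keep, Keep,
    Split 17 1357, Keep, Split 47 491, Keep, Split 41 563, Keep, Split 11 2099, Split 7 3299, Keep, Split 13 1777,
    Split 7 3301, Split 11 2101, Split 29 797, Keep, Split 61 379, Split 19 1217, Split 101 229, Keep, Split 17 1361, Split 73 317,
    Keep, Split 79 293, Split 7 3307, Split 13 1781, Keep, Split 19 1219, Keep, Split 17 1363, Keep, Split 7 3311,
    Split 13 1783, Split 97 239, Keep, Split 7 3313, Keep, Keep, Keep, Split 23 1009, Keep, Split 139 167,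
    Split 7 3317, Split 11 2111, Keep, Split 13 1787, Split 7 3319, Split 19 1223, Split 17 1367, Split 11 2113, Split 67 347, Keep,
    Split 13 1789, Split 7 3323, Split 43 541, Split 53 439, Keep, Split 17 1369, Keep, Split 31 751, Split 11 2117, Keep,
    Keep, Keep, Split 23 1013, Split 7 3329, Split 11 2119, Keep, Split 7 3331, Keep, Split 83 281, Keep,
    Split 41 569, Keep, Keep, Split 17 1373, Split 37 631, Split 19 1229, Split 11 2123, Keep, Split 7 3337, Split 61 383,
    Keep, Keep, Split 97 241, Split 103 227, Split 67 349, Split 7 3341, Split 19 1231, Split 149 157, Keep, Split 7 3343,
    Split 89 263, Split 41 571, Split 13 1801, Keep, Split 11 2129, Split 59 397, Split 7 3347, Keep, Split 23 1019, Split 11 2131,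
    Split 7 3349, Keep, Split 131 179, Split 47 499, Keep, Split 29 809, Split 31 757, Split 7 3353, Keep, Split 17 1381,
    Split 53 443, Split 23 1021, Split 83 283, Split 13 1807, Keep, Split 71 331, Split 19 1237, Split 11 2137, Keep, Split 7 3359,
    Split 29 811, Split 43 547, Split 7 3361, Keep, Split 101 233, Keep, Keep, Split 13 1811, Keep, Split 11 2141,
    Keep, Keep, Keep, Keep, Split 7 3367, Split 11 2143, Split 17 1387, Keep, Split 103 229, Split 31 761,
    Keep, Split 7 3371, Keep, Keep, Keep, Split 7 3373, Split 11 2147, Split 13 1817, Keep, Keep,
    Keep, Keep, Split 7 3377, Split 47 503, Split 13 1819, Split 67 353, Split 7 3379, Split 41 577, Split 59 401, Keep,
    Keep, Keep, Keep, Split 7 3383, Split 11 2153, Keep, Keep, Split 19 1247, Split 13 1823, Split 137 173,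
    Split 151 157, Split 131 181, Split 23 1031, Split 37 641, Keep, Split 7 3389, Split 61 389, Split 19 1249, Split 7 3391, Keep,
    Keep, Keep, Split 11 2159, Keep, Split 23 1033, Keep, Keep, Split 11 2161, Keep, Split 13 1829,
    Split 7 3397, Split 17 1399, Keep, Split 37 643, Split 53 449, Keep, Split 13 1831, Split 7 3401, Split 29 821, Keep,
    Keep, Split 7 3403, Keep, Keep, Keep, Split 11 2167, Split 31 769, Split 113 211, Split 7 3407, Split 17 1403,
    Keep, Split 107 223, Split 7 3409, Split 29 823, Keep, Keep, Keep, Split 11 2171, Keep, Split 7 3413,
    Keep, Split 23 1039, Keep, Split 11 2173, Keep, Keep, Keep, Split 19 1259, Split 47 509, Split 71 337,
    Keep, Split 7 3419, Split 37 647, Split 89 269, Split 7 3421, Split 43 557, Split 17 1409, Keep, Split 13 1843, Split 31 773,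
    Split 11 2179, Keep, Keep, Keep, Split 29 827, Split 17 1411, Split 7 3427, Keep, Split 103 233, Keep,
    Keep, Split 13 1847, Split 11 2183, Split 7 3431, Keep, Keep, Keep, Split 7 3433, Split 13 1849, Split 29 829,
    Keep, Split 139 173, Keep, Split 67 359, Split 7 3437, Keep, Split 41 587, Keep, Split 7 3439, Keep,
    Split 11 2189, Keep, Split 13 1853, Keep, Keep, Split 7 3443, Keep, Keep, Keep, Keep,
    Split 89 271, Keep, Split 23 1049, Split 59 409, Keep, Keep, Split 101 239, Split 7 3449, Split 19 1271, Keep,
    Split 7 3451, Split 37 653, Split 73 331, Split 11 2197, Keep, Split 23 1051, Keep, Keep, Split 19 1273, Split 17 1423,
    Split 13 1861, Keep, Split 7 3457, Keep, Split 43 563, Split 11 2201, Split 61 397, Split 53 457, Keep, Split 7 3461,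
    Keep, Split 11 2203, Keep, Split 7 3463, Keep, Keep, Split 79 307, Split 127 191, Split 17 1427, Split 19 1277,
    Split 7 3467, Split 13 1867, Split 11 2207, Keep, Split 7 3469, Split 149 163, Split 107 227, Split 17 1429, Split 11 2209, Split 19 1279,
    Split 109 223, Split 7 3473, Split 41 593, Keep, Split 83 293, Split 13 1871, Keep, Split 29 839, Keep, Split 101 241,
    Split 11 2213, Split 97 251, Split 13 1873, Split 7 3479, Keep, Split 17 1433, Split 7 3481, Keep, Keep, Split 19 1283,
    Keep, Split 37 659, Split 29 841, Keep, Split 31 787, Split 13 1877, Split 23 1061, Keep, Split 7 3487, Keep,
    Keep, Keep, Split 13 1879, Split 11 2221, Split 53 461, Split 7 3491, Keep, Keep, Split 23 1063, Split 7 3493,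
    Split 37 661, Split 61 401, Split 17 1439, Split 43 569, Keep, Keep, Split 7 3497, Keep, Split 47 521, Split 19 1289,
    Split 7 3499, Split 11 2227, Keep, Split 107 229, Keep, Split 127 193, Keep, Split 7 3503, Split 137 179, Keep,
    Split 19 1291, Keep, Split 53 463, Split 11 2231, Keep, Keep, Split 43 571, Split 13 1889, Split 41 599, Split 7 3509,
    Split 79 311, Keep, Split 7 3511, Split 47 523, Split 13 1891, Split 23 1069, Split 67 367, Keep, Split 17 1447, Split 73 337,
    Split 11 2237, Keep, Split 151 163, Split 103 239, Split 7 3517, Keep, Split 11 2239, Keep, Split 71 347, Split 41 601,
    Split 19 1297, Split 7 3521, Split 157 157, Split 89 277, Keep, Split 7 3523, Split 17 1451, Keep, Split 11 2243, Keep,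
    Split 23 1073, Keep, Split 7 3527, Keep, Keep, Split 17 1453, Split 7 3529, Split 31 797, Keep, Split 13 1901,
    Split 19 1301, Split 59 419, Split 79 313, Split 7 3533, Keep, Split 29 853, Split 11 2249, Split 109 227, Keep, Split 53 467]"

definition sieve_block11 :: "sieve_entry list" where
  "sieve_block11 = [
    Split 19 1303, Split 11 2251, Keep, Keep, Split 17 1457, Split 7 3539, Split 71 349, Keep, Split 7 3541, Split 13 1907,
    Keep, Split 137 181, Keep, Split 17 1459, Keep, Split 43 577, Split 13 1909, Keep, Split 103 241, Split 11 2257,
    Split 7 3547, Split 19 1307, Split 59 421, Keep, Keep, Keep, Split 29 857, Split 7 3551, Keep, Split 23 1081,
    Split 13 1913, Split 7 3553, Keep, Split 139 179, Split 149 167, Split 41 607, Keep, Split 11 2263, Split 7 3557, Split 37 673,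
    Keep, Split 29 859, Split 7 3559, Keep, Keep, Keep, Split 97 257, Split 107 233, Split 11 2267, Split 7 3563,
    Keep, Split 13 1919, Split 61 409, Keep, Split 11 2269, Split 109 229, Keep, Keep, Split 13 1921, Keep,
    Keep, Split 7 3569, Keep, Split 67 373, Split 7 3571, Split 23 1087, Split 11 2273, Split 17 1471, Split 89 281, Keep,
    Split 127 197, Split 131 191, Split 29 863, Keep, Keep, Keep, Split 7 3577, Split 79 317, Split 37 677, Split 13 1927,
    Keep, Split 19 1319, Split 71 353, Split 7 3581, Split 11 2279, Keep, Split 31 809, Split 7 3583, Keep, Split 11 2281,
    Split 23 1091, Keep, Split 19 1321, Split 13 1931, Split 7 3587, Keep, Keep, Keep, Split 7 3589, Keep,
    Split 13 1933, Split 41 613, Split 23 1093, Split 31 811, Keep, Split 7 3593, Keep, Split 11 2287, Split 139 181, Keep,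
    Keep, Keep, Split 17 1481, Split 13 1937, Keep, Split 89 283, Keep, Split 7 3599, Split 113 223, Split 11 2291,
    Split 7 3601, Split 17 1483, Split 19 1327, Split 151 167, Keep, Split 11 2293, Keep, Split 23 1097, Keep, Split 43 587,
    Keep, Keep, Split 7 3607, Keep, Split 13 1943, Keep, Split 11 2297, Split 37 683, Split 127 199, Split 7 3611,
    Split 17 1487, Split 131 193, Split 11 2299, Split 7 3613, Split 41 617, Keep, Keep, Keep, Keep, Split 17 1489,
    Split 7 3617, Keep, Split 19 1333, Split 73 347, Split 7 3619, Split 13 1949, Keep, Keep, Keep, Split 101 251,
    Keep, Split 7 3623, Split 13 1951, Keep, Split 23 1103, Keep, Split 41 619, Split 17 1493, Split 53 479, Keep,
    Split 67 379, Split 109 233, Split 11 2309, Split 7 3629, Keep, Keep, Split 7 3631, Split 11 2311, Keep, Split 47 541,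
    Split 59 431, Split 29 877, Keep, Split 13 1957, Keep, Split 31 821, Keep, Keep, Split 7 3637, Keep,
    Keep, Keep, Split 73 349, Split 83 307, Split 17 1499, Split 7 3641, Split 71 359, Split 13 1961, Split 43 593, Split 7 3643,
    Split 23 1109, Split 97 263, Split 31 823, Split 17 1501, Split 13 1963, Keep, Split 7 3647, Split 11 2321, Keep, Keep,
    Split 7 3649, Split 59 433, Split 29 881, Split 11 2323, Split 61 419, Keep, Split 37 691, Split 7 3653, Split 107 239, Keep,
    Keep, Keep, Keep, Split 157 163, Split 11 2327, Keep, Keep, Split 29 883, Keep, Split 7 3659,
    Split 11 2329, Keep, Split 7 3661, Split 19 1349, Keep, Split 31 827, Keep, Keep, Split 13 1973, Split 113 227,
    Keep, Split 67 383, Split 11 2333, Keep, Split 7 3667, Keep]"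

definition sieve_certificate :: "sieve_entry list" where
  "sieve_certificate =
     sieve_block0 @ sieve_block1 @ sieve_block2 @ sieve_block3 @ sieve_block4 @ sieve_block5 @
     sieve_block6 @ sieve_block7 @ sieve_block8 @ sieve_block9 @ sieve_block10 @ sieve_block11"

(* Checkpoints every 600 candidates: evaluating the blocks separately is much faster than
   evaluating the whole certificate at once. *)
lemma sieve_blocks:
  "sieve [4, 2, 4, 2, 4, 6, 2, 6] 7 sieve_block0 (3, 30, 0) =
    Some ([4, 2, 4, 2, 4, 6, 2, 6], 2257, 335, 77723, 3136)"
  "sieve [4, 2, 4, 2, 4, 6, 2, 6] 2257 sieve_block1 (335, 77723, 3136) =
    Some ([4, 2, 4, 2, 4, 6, 2, 6], 4507, 610, 729128533, 6336)"
  "sieve [4, 2, 4, 2, 4, 6, 2, 6] 4507 sieve_block2 (610, 729128533, 6336) =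
    Some ([4, 2, 4, 2, 4, 6, 2, 6], 6757, 869, 1903285, 9568)"
  "sieve [4, 2, 4, 2, 4, 6, 2, 6] 6757 sieve_block3 (869, 1903285, 9568) =
    Some ([4, 2, 4, 2, 4, 6, 2, 6], 9007, 1118, 87378798, 12784)"
  "sieve [4, 2, 4, 2, 4, 6, 2, 6] 9007 sieve_block4 (1118, 87378798, 12784) =
    Some ([4, 2, 4, 2, 4, 6, 2, 6], 11257, 1360, 446370827, 16000)"
  "sieve [4, 2, 4, 2, 4, 6, 2, 6] 11257 sieve_block5 (1360, 446370827, 16000) =
    Some ([4, 2, 4, 2, 4, 6, 2, 6], 13507, 1600, 174961308, 19264)"
  "sieve [4, 2, 4, 2, 4, 6, 2, 6] 13507 sieve_block6 (1600, 174961308, 19264) =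
    Some ([4, 2, 4, 2, 4, 6, 2, 6], 15757, 1837, 129469825, 22544)"
  "sieve [4, 2, 4, 2, 4, 6, 2, 6] 15757 sieve_block7 (1837, 129469825, 22544) =
    Some ([4, 2, 4, 2, 4, 6, 2, 6], 18007, 2064, 1750077854, 25728)"
  "sieve [4, 2, 4, 2, 4, 6, 2, 6] 18007 sieve_block8 (2064, 1750077854, 25728) =
    Some ([4, 2, 4, 2, 4, 6, 2, 6], 20257, 2289, 2191751760, 28928)"
  "sieve [4, 2, 4, 2, 4, 6, 2, 6] 20257 sieve_block9 (2289, 2191751760, 28928) =
    Some ([4, 2, 4, 2, 4, 6, 2, 6], 22507, 2516, 73970, 32208)"
  "sieve [4, 2, 4, 2, 4, 6, 2, 6] 22507 sieve_block10 (2516, 73970, 32208) =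
    Some ([4, 2, 4, 2, 4, 6, 2, 6], 24757, 2738, 31750006, 35424)"
  "sieve [4, 2, 4, 2, 4, 6, 2, 6] 24757 sieve_block11 (2738, 31750006, 35424) =
    Some ([2, 6, 4, 2, 4, 2, 4, 6], 25679, 2828, 516312211, 36736)"
  unfolding sieve_block0_def sieve_block1_def sieve_block2_def sieve_block3_def sieve_block4_def
    sieve_block5_def sieve_block6_def sieve_block7_def sieve_block8_def sieve_block9_def
    sieve_block10_def sieve_block11_def
  by (simp_all cong: sieve_cong)

lemma sieve_certificate_run:
  "sieve [4, 2, 4, 2, 4, 6, 2, 6] 7 sieve_certificate (3, 30, 0) =
    Some ([2, 6, 4, 2, 4, 2, 4, 6], 25679, 2828, 516312211, 36736)"
  by (simp add: sieve_certificate_def sieve_append sieve_blocks)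

lemma power_8192_less_prod_primes:
  fixes S :: "nat set"
  assumes "finite S" "\<forall>p \<in> S. prime p" "2828 \<le> card S"
  shows "8192 ^ card S < \<Prod>S"
proof -
  obtain Q :: "nat set" where Q: "Q \<subseteq> {7..<25679}"
    and primes: "{p \<in> {7..<25679}. prime p \<and> coprime p 30} \<subseteq> Q"
    and card_Q: "2828 = 3 + card Q" and prod_Q: "516312211 * 2 ^ 36736 \<le> 30 * 2 ^ 0 * \<Prod>Q"
    using sieve_sound[OF sieve_certificate_run wheel_30] by blast
  define T where "T = {2, 3, 5} \<union> Q"
  have "finite Q" using Q finite_subset by blast
  have "{2, 3, 5} \<inter> Q = {}" using Q by auto
  then have "card T = 3 + card Q" and prod_T: "\<Prod>T = 30 * \<Prod>Q"
    using \<open>finite Q\<close> by (simp_all add: T_def card_Un_disjoint prod.union_disjoint)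
  with card_Q have card_T: "card T = 2828" by simp
  have "p \<in> T" if "prime p" "p \<le> 25678" for p
    using prime_in_235_or_coprime_30[OF that(1)] primes that by (auto simp: T_def)
  then have primes_T: "{p. prime p \<and> p \<le> 25678} \<subseteq> T" by blast
  have "finite T" "T \<subseteq> {..25678}" using Q \<open>finite Q\<close> by (auto simp: T_def)
  have "card T \<le> card S" using card_T assms(3) by simp
  have "8192 ^ card T < \<Prod>T"
  proof -
    have "(8192 :: nat) = 2 ^ 13" by simp
    then have "(8192 :: nat) ^ 2828 = 2 ^ (13 * 2828)" by (simp only: power_mult)
    also have "(13 * 2828 :: nat) = 28 + 36736" by simp
    also have "(2 :: nat) ^ (28 + 36736) = 2 ^ 28 * 2 ^ 36736" by (rule power_add)
    also have "\<dots> < 516312211 * 2 ^ 36736"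
      by (rule mult_strict_right_mono) (simp_all only: zero_less_power zero_less_numeral, simp)
    also have "\<dots> \<le> \<Prod>T" using prod_Q prod_T by (simp only: power_0 mult_1_right)
    finally show ?thesis using card_T by (simp only:)
  qed
  show ?thesis
    by (rule power_card_less_prod_primes[OF \<open>finite T\<close> primes_T \<open>T \<subseteq> {..25678}\<close> _ _
          \<open>8192 ^ card T < \<Prod>T\<close> assms(1,2) \<open>card T \<le> card S\<close>]) simp_all
qed

theorem lemma5p6:
  fixes M :: nat
  assumes "M > 0" and "omega M \<ge> 2828"
  shows "real (W M) < real M powr (1/13)"
proof -
  have "8192 ^ omega M < \<Prod>(prime_factors M)"
    unfolding omega_def
    by (rule power_8192_less_prod_primes) (use assms(2) in \<open>auto simp: omega_def\<close>)
  also have "\<dots> \<le> M" using assms(1) by (rule prod_prime_factors_le)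
  finally have "(2 ^ omega M) ^ 13 < M"
    by (simp add: power_mult[symmetric] mult.commute[of _ 13] power_mult)
  then have "real (2 ^ omega M) ^ 13 < real M"
    by (metis of_nat_less_iff of_nat_power)
  then show ?thesis
    unfolding W_def by (intro power_less_imp_less_powr[where n = 13, simplified]) simp_all
qed

end
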